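(* Let $I\subset\mathbb R$ be an open interval, let $f:I\to\mathbb R$ be continuous and bounded from below, and let $g:\mathrm{Im}(f)\to\mathbb R$ be continuous. The following are equivalent: (1) $f''\le g(f)$ in the viscosity sense on $I$, i.e., for every $x\in I$ and every smooth $\varphi$ defined in a neighborhood of $x$ such that $\varphi-f$ has a local maximum at $x$, one has $\varphi''(x)\le g(f(x))$; (2) $f''\le g(f)$ in the sense of distributions on $I$, i.e., $\int f\varphi''\,dx\le\int g(f)\varphi\,dx$ for every $\varphi\in C^\infty_c(I)$ with $\varphi\ge0$; (3) $\overline D^2f(x)\le g(f(x))$ for every $x\in I$.
   Context: $\overline D^2f(x)=\limsup_{h\to0^+}\frac{f(x+h)+f(x-h)-2f(x)}{h^2}$. *)

theory Defs
  imports "HOL-Analysis.Analysis" "HOL-Library.Liminf_Limsup"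
begin

definition smooth_on :: "real set \<Rightarrow> (real \<Rightarrow> real) \<Rightarrow> bool" where
  "smooth_on U \<phi> \<longleftrightarrow> (\<forall>n. \<forall>x\<in>U. ((deriv ^^ n) \<phi>) differentiable (at x))"

definition visc_super :: "real set \<Rightarrow> (real \<Rightarrow> real) \<Rightarrow> (real \<Rightarrow> real) \<Rightarrow> bool" where
  "visc_super I f g \<longleftrightarrow>
     (\<forall>x\<in>I. \<forall>\<phi> U. open U \<and> x \<in> U \<and> smooth_on U \<phi> \<and>
        (\<exists>e>0. \<forall>y\<in>U. \<bar>y - x\<bar> < e \<longrightarrow> \<phi> y - f y \<le> \<phi> x - f x)
        \<longrightarrow> deriv (deriv \<phi>) x \<le> g (f x))"

definition test_fun :: "real set \<Rightarrow> (real \<Rightarrow> real) \<Rightarrow> bool" where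
  "test_fun I \<phi> \<longleftrightarrow> smooth_on UNIV \<phi> \<and> compact (closure {x. \<phi> x \<noteq> 0})
      \<and> closure {x. \<phi> x \<noteq> 0} \<subseteq> I"

definition distr_super :: "real set \<Rightarrow> (real \<Rightarrow> real) \<Rightarrow> (real \<Rightarrow> real) \<Rightarrow> bool" where
  "distr_super I f g \<longleftrightarrow>
     (\<forall>\<phi>. test_fun I \<phi> \<and> (\<forall>x. \<phi> x \<ge> 0) \<longrightarrow>
        integral I (\<lambda>x. f x * deriv (deriv \<phi>) x) \<le> integral I (\<lambda>x. g (f x) * \<phi> x))"

definition upper_D2 :: "(real \<Rightarrow> real) \<Rightarrow> real \<Rightarrow> ereal" where
  "upper_D2 f x = Limsup (at_right 0) (\<lambda>h. ereal ((f (x + h) + f (x - h) - 2 * f x) / h\<^sup>2))"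

end

theory Submission
  imports Defs "HOL-Computational_Algebra.Polynomial"
begin

text \<open>All three conditions are equivalent to a fourth one about second differences:
  whenever \<open>g \<circ> f \<le> M\<close> on \<open>[c - h, c + h] \<subseteq> I\<close>, then \<open>f (c + h) + f (c - h) - 2 f c \<le> M h\<^sup>2\<close>.

  If this bound fails, subtracting from \<open>f\<close> the parabola \<open>M' (y - c)\<^sup>2 / 2\<close> (for some \<open>M' > M\<close>) and
  a chord leaves a function whose minimum on \<open>[c - h, c + h]\<close> is interior; so a parabola with second
  derivative \<open>M'\<close> touches \<open>f\<close> from below at an interior point \<open>x\<^sub>0\<close>, which contradicts both
  the viscosity inequality and \<open>D\<^sup>2f(x\<^sub>0) \<le> g (f x\<^sub>0)\<close>. Conversely, the bound on second differences
  gives the bound on the upper symmetric derivative directly, and the viscosity inequality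
  because the second difference quotients of a smooth \<open>\<phi>\<close> converge to \<open>\<phi>''\<close>.

  For distributions, \<open>\<integral> f \<Delta>\<^sub>t\<^sup>2\<phi> = \<integral> \<phi> \<Delta>\<^sub>t\<^sup>2f\<close> and \<open>\<Delta>\<^sub>t\<^sup>2\<phi> / t\<^sup>2 \<rightarrow> \<phi>''\<close> uniformly turn the bound on second
  differences into the distributional inequality. Conversely, testing the distributional inequality
  against a smoothed hat function, whose second derivative approximates
  \<open>\<delta>\<^sub>c\<^sub>-\<^sub>h - 2 \<delta>\<^sub>c + \<delta>\<^sub>c\<^sub>+\<^sub>h\<close>, bounds the second difference of \<open>f - M (y - c)\<^sup>2 / 2\<close>, provided
  \<open>g \<circ> f \<le> M\<close> on a slightly larger interval; continuity of \<open>g \<circ> f\<close> then bounds \<open>D\<^sup>2f\<close>.\<close>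

definition second_diff :: "(real \<Rightarrow> real) \<Rightarrow> real \<Rightarrow> real \<Rightarrow> real" where
  "second_diff f x h = f (x + h) + f (x - h) - 2 * f x"

definition second_diff_super :: "real set \<Rightarrow> (real \<Rightarrow> real) \<Rightarrow> (real \<Rightarrow> real) \<Rightarrow> bool" where
  "second_diff_super I f k \<longleftrightarrow>
     (\<forall>c h M. 0 < h \<and> {c - h..c + h} \<subseteq> I \<and> (\<forall>y\<in>{c - h..c + h}. k y \<le> M)
        \<longrightarrow> second_diff f c h \<le> M * h\<^sup>2)"

lemma second_diff_affine:
  assumes "0 \<le> h" "\<And>y. y \<in> {x - h..x + h} \<Longrightarrow> F y = \<alpha> + \<beta> * y"
  shows "second_diff F x h = 0"
  using assms by (simp add: second_diff_def algebra_simps)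

lemma second_diff_quadratic: "second_diff (\<lambda>y. M / 2 * (y - c)\<^sup>2) c h = M * h\<^sup>2"
  by (simp add: second_diff_def power2_eq_square field_simps)

subsection \<open>Smooth functions given by their sequence of derivatives\<close>

definition deriv_seq :: "(nat \<Rightarrow> real \<Rightarrow> real) \<Rightarrow> bool" where
  "deriv_seq D \<longleftrightarrow> (\<forall>n x. (D n has_real_derivative D (Suc n) x) (at x))"

lemma deriv_seqD: "deriv_seq D \<Longrightarrow> (D n has_real_derivative D (Suc n) x) (at x)"
  by (simp add: deriv_seq_def)

lemma higher_deriv_deriv_seq:
  assumes "deriv_seq D"
  shows "(deriv ^^ n) (D 0) = D n"
proof (induction n)
  case (Suc n)
  show ?case
    by (rule ext) (simp add: Suc DERIV_imp_deriv[OF deriv_seqD[OF assms]])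
qed simp

lemma smooth_on_deriv_seq: "deriv_seq D \<Longrightarrow> smooth_on U (D 0)"
  unfolding smooth_on_def by (auto simp: higher_deriv_deriv_seq real_differentiable_def dest: deriv_seqD)

lemma deriv2_deriv_seq: "deriv_seq D \<Longrightarrow> deriv (deriv (D 0)) = D 2"
  using higher_deriv_deriv_seq[of D 2] by (simp add: numeral_2_eq_2)

lemma deriv_seq_antiderivative:
  assumes "deriv_seq D" "\<And>x. (F has_real_derivative D 0 x) (at x)"
  shows "deriv_seq (\<lambda>n. case n of 0 \<Rightarrow> F | Suc m \<Rightarrow> D m)"
  unfolding deriv_seq_def
proof (intro allI)
  fix n x
  show "((case n of 0 \<Rightarrow> F | Suc m \<Rightarrow> D m) has_real_derivative
      (case Suc n of 0 \<Rightarrow> F | Suc m \<Rightarrow> D m) x) (at x)"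
    using assms by (cases n) (auto dest: deriv_seqD)
qed

lemma deriv_seq_affine_change:
  assumes "deriv_seq D"
  shows "deriv_seq (\<lambda>n y. a * b ^ n * D n (b * y + p))"
  unfolding deriv_seq_def
proof (intro allI)
  fix n x
  have "((\<lambda>y. D n (b * y + p)) has_real_derivative D (Suc n) (b * x + p) * b) (at x)"
    by (rule DERIV_chain2[OF deriv_seqD[OF assms]]) (auto intro!: derivative_eq_intros)
  then show "((\<lambda>y. a * b ^ n * D n (b * y + p)) has_real_derivative a * b ^ Suc n * D (Suc n) (b * x + p)) (at x)"
    by (auto intro!: derivative_eq_intros simp: algebra_simps)
qed

lemma deriv_seq_shift: "deriv_seq D \<Longrightarrow> deriv_seq (\<lambda>n y. D n (y - p))"
  using deriv_seq_affine_change[of D 1 1 "- p"] by simp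

lemma deriv_seq_second_diff:
  assumes "deriv_seq D"
  shows "deriv_seq (\<lambda>n y. second_diff (D n) (y - c) h)"
proof -
  have shift: "deriv_seq (\<lambda>n y. D n (y + p))" for p
    using deriv_seq_affine_change[OF assms, of 1 1 p] by simp
  show ?thesis
    unfolding deriv_seq_def second_diff_def
    using shift[of "h - c"] shift[of "- h - c"] shift[of "- c"]
    by (auto intro!: derivative_eq_intros simp: deriv_seq_def algebra_simps)
qed

lemma smooth_on_quadratic:
  fixes A B M x0 :: real
  defines "q \<equiv> \<lambda>y. A + B * (y - x0) + M / 2 * (y - x0)\<^sup>2"
  shows "smooth_on U q" and "deriv (deriv q) x = M"
proof -
  define D :: "nat \<Rightarrow> real \<Rightarrow> real" where
    "D n = (case n of 0 \<Rightarrow> q | Suc 0 \<Rightarrow> (\<lambda>y. B + M * (y - x0)) | Suc (Suc 0) \<Rightarrow> (\<lambda>_. M) | _ \<Rightarrow> (\<lambda>_. 0))"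
    for n
  have seq: "deriv_seq D"
    unfolding deriv_seq_def D_def q_def
    by (auto split: nat.split intro!: derivative_eq_intros)
  have "D 0 = q" by (simp add: D_def)
  then show "smooth_on U q" "deriv (deriv q) x = M"
    using smooth_on_deriv_seq[OF seq] deriv2_deriv_seq[OF seq] by (simp_all add: D_def numeral_2_eq_2)
qed

lemma smooth_onD:
  assumes "smooth_on U \<phi>" "x \<in> U"
  shows "(\<phi> has_real_derivative deriv \<phi> x) (at x)"
    and "(deriv \<phi> has_real_derivative deriv (deriv \<phi>) x) (at x)"
    and "isCont (deriv (deriv \<phi>)) x"
proof -
  have "((deriv ^^ n) \<phi>) differentiable (at x)" for n
    using assms unfolding smooth_on_def by blast
  from this[of 0] this[of 1] this[of 2]
  show "(\<phi> has_real_derivative deriv \<phi> x) (at x)"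
    and "(deriv \<phi> has_real_derivative deriv (deriv \<phi>) x) (at x)"
    and "isCont (deriv (deriv \<phi>)) x"
    by (simp_all add: numeral_2_eq_2 DERIV_deriv_iff_real_differentiable differentiable_imp_continuous_within)
qed

lemma second_diff_mvt:
  fixes \<phi> \<phi>1 \<phi>2 :: "real \<Rightarrow> real"
  assumes h: "0 < h"
    and d1: "\<And>t. \<bar>t - x\<bar> \<le> h \<Longrightarrow> (\<phi> has_real_derivative \<phi>1 t) (at t)"
    and d2: "\<And>t. \<bar>t - x\<bar> \<le> h \<Longrightarrow> (\<phi>1 has_real_derivative \<phi>2 t) (at t)"
  obtains \<xi> where "\<bar>\<xi> - x\<bar> < h" "second_diff \<phi> x h = h\<^sup>2 * \<phi>2 \<xi>"
proof -
  define G where "G s = second_diff \<phi> x s" for s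
  have dG: "(G has_real_derivative \<phi>1 (x + s) - \<phi>1 (x - s)) (at s)" if "0 \<le> s" "s \<le> h" for s
  proof -
    have "((\<lambda>s. \<phi> (x + s)) has_real_derivative \<phi>1 (x + s) * 1) (at s)"
      by (rule DERIV_chain2[OF d1]) (use that in \<open>auto intro!: derivative_eq_intros\<close>)
    moreover have "((\<lambda>s. \<phi> (x - s)) has_real_derivative \<phi>1 (x - s) * (-1)) (at s)"
      by (rule DERIV_chain2[OF d1]) (use that in \<open>auto intro!: derivative_eq_intros\<close>)
    ultimately show ?thesis
      unfolding G_def second_diff_def by (auto intro!: derivative_eq_intros)
  qed
  have dsq: "((\<lambda>u. u\<^sup>2) has_real_derivative 2 * s) (at s)" for s :: real
    by (auto intro!: derivative_eq_intros)
  \<comment> \<open>Cauchy's mean value theorem for \<open>G\<close> and \<open>s\<^sup>2\<close>, then the ordinary one for \<open>\<phi>1\<close>.\<close>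
  obtain s where s: "0 < s" "s < h" "(G h - G 0) * (2 * s) = (h\<^sup>2 - 0\<^sup>2) * (\<phi>1 (x + s) - \<phi>1 (x - s))"
    using GMVT'[of 0 h G "\<lambda>u. u\<^sup>2" "\<lambda>u. 2 * u" "\<lambda>s. \<phi>1 (x + s) - \<phi>1 (x - s)"] h dG dsq
    by (force intro: DERIV_isCont)
  obtain \<xi> where \<xi>: "x - s < \<xi>" "\<xi> < x + s" "\<phi>1 (x + s) - \<phi>1 (x - s) = ((x + s) - (x - s)) * \<phi>2 \<xi>"
    using MVT2[of "x - s" "x + s" \<phi>1 \<phi>2] d2 s by force
  have "G h = h\<^sup>2 * \<phi>2 \<xi>"
    using s \<xi> by (simp add: G_def second_diff_def)
  moreover have "\<bar>\<xi> - x\<bar> < h" using s \<xi> by auto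
  ultimately show ?thesis using that by (simp add: G_def)
qed

lemma second_diff_uniform_approx:
  fixes \<phi> \<phi>1 \<phi>2 :: "real \<Rightarrow> real"
  assumes "0 < r" "0 < \<epsilon>"
    and d1: "\<And>y. y \<in> {a - r..b + r} \<Longrightarrow> (\<phi> has_real_derivative \<phi>1 y) (at y)"
    and d2: "\<And>y. y \<in> {a - r..b + r} \<Longrightarrow> (\<phi>1 has_real_derivative \<phi>2 y) (at y)"
    and c2: "continuous_on {a - r..b + r} \<phi>2"
  obtains \<delta> where "0 < \<delta>"
    "\<And>t y. 0 < t \<Longrightarrow> t < \<delta> \<Longrightarrow> y \<in> {a..b} \<Longrightarrow> \<bar>second_diff \<phi> y t - t\<^sup>2 * \<phi>2 y\<bar> \<le> \<epsilon> * t\<^sup>2"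
proof -
  obtain \<delta>0 where \<delta>0: "0 < \<delta>0"
    "\<And>y z. y \<in> {a - r..b + r} \<Longrightarrow> z \<in> {a - r..b + r} \<Longrightarrow> dist z y < \<delta>0 \<Longrightarrow> dist (\<phi>2 z) (\<phi>2 y) < \<epsilon>"
    using compact_uniformly_continuous[OF c2 compact_Icc] \<open>0 < \<epsilon>\<close>
    unfolding uniformly_continuous_on_def by metis
  show ?thesis
  proof (rule that[of "min r \<delta>0"])
    show "0 < min r \<delta>0" using \<open>0 < r\<close> \<delta>0 by simp
    fix t y assume t: "0 < t" "t < min r \<delta>0" and y: "y \<in> {a..b}"
    have near: "s \<in> {a - r..b + r}" if "\<bar>s - y\<bar> \<le> t" for s
      using that t y by auto
    obtain \<xi> where \<xi>: "\<bar>\<xi> - y\<bar> < t" "second_diff \<phi> y t = t\<^sup>2 * \<phi>2 \<xi>"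
      using second_diff_mvt[OF t(1), of y \<phi> \<phi>1 \<phi>2] d1 d2 near by blast
    have "\<bar>\<phi>2 \<xi> - \<phi>2 y\<bar> < \<epsilon>"
      using \<delta>0(2)[of y \<xi>] near[of y] near[of \<xi>] \<xi>(1) t by (simp add: dist_real_def)
    then have "\<bar>\<phi>2 \<xi> - \<phi>2 y\<bar> * t\<^sup>2 \<le> \<epsilon> * t\<^sup>2"
      by (intro mult_right_mono) auto
    moreover have "second_diff \<phi> y t - t\<^sup>2 * \<phi>2 y = (\<phi>2 \<xi> - \<phi>2 y) * t\<^sup>2"
      by (simp add: \<xi>(2) algebra_simps)
    ultimately show "\<bar>second_diff \<phi> y t - t\<^sup>2 * \<phi>2 y\<bar> \<le> \<epsilon> * t\<^sup>2"
      by (simp add: abs_mult)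
  qed
qed

lemma second_diff_quotient_tendsto:
  assumes sm: "smooth_on U \<phi>" and "open U" "x \<in> U"
  shows "((\<lambda>t. second_diff \<phi> x t / t\<^sup>2) \<longlongrightarrow> deriv (deriv \<phi>) x) (at_right 0)"
proof -
  obtain r0 where r0: "0 < r0" "ball x r0 \<subseteq> U"
    using \<open>open U\<close> \<open>x \<in> U\<close> open_contains_ball by blast
  define r where "r = r0 / 2"
  have r: "0 < r" using r0 by (simp add: r_def)
  have box: "{x - r..x + r} \<subseteq> U"
    using r0 by (force simp: r_def dist_real_def)
  have c2: "continuous_on {x - r..x + r} (deriv (deriv \<phi>))"
    using smooth_onD(3)[OF sm] box by (blast intro: continuous_at_imp_continuous_on)
  show ?thesis
    unfolding tendsto_iff
  proof (intro allI impI)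
    fix \<epsilon> :: real assume "0 < \<epsilon>"
    then obtain \<delta> where \<delta>: "0 < \<delta>"
      "\<And>t y. 0 < t \<Longrightarrow> t < \<delta> \<Longrightarrow> y \<in> {x..x} \<Longrightarrow>
         \<bar>second_diff \<phi> y t - t\<^sup>2 * deriv (deriv \<phi>) y\<bar> \<le> \<epsilon> / 2 * t\<^sup>2"
      using second_diff_uniform_approx[OF r half_gt_zero, of \<epsilon> x x \<phi> "deriv \<phi>" "deriv (deriv \<phi>)"]
        smooth_onD(1,2)[OF sm] box c2 by blast
    show "\<forall>\<^sub>F t in at_right 0. dist (second_diff \<phi> x t / t\<^sup>2) (deriv (deriv \<phi>) x) < \<epsilon>"
      unfolding eventually_at_right_field
    proof (intro exI[of _ \<delta>] conjI allI impI)
      fix t :: real assume t: "0 < t" "t < \<delta>"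
      have "\<bar>second_diff \<phi> x t / t\<^sup>2 - deriv (deriv \<phi>) x\<bar> = \<bar>second_diff \<phi> x t - t\<^sup>2 * deriv (deriv \<phi>) x\<bar> / t\<^sup>2"
        using t by (simp add: field_simps abs_div)
      also have "\<dots> \<le> \<epsilon> / 2"
        using \<delta>(2)[OF t, of x] t by (simp add: divide_le_eq)
      finally show "dist (second_diff \<phi> x t / t\<^sup>2) (deriv (deriv \<phi>) x) < \<epsilon>"
        using \<open>0 < \<epsilon>\<close> by (simp add: dist_real_def)
    qed (use \<delta> in simp)
  qed
qed

lemma upper_D2_second_diff:
  "upper_D2 f x = Limsup (at_right 0) (\<lambda>t. ereal (second_diff f x t / t\<^sup>2))"
  by (simp add: upper_D2_def second_diff_def)

lemma upper_D2_leI: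
  assumes "\<And>\<epsilon>. 0 < \<epsilon> \<Longrightarrow> \<forall>\<^sub>F t in at_right 0. second_diff f x t \<le> (K + \<epsilon>) * t\<^sup>2"
  shows "upper_D2 f x \<le> ereal K"
proof (rule ereal_le_epsilon2)
  fix \<epsilon> :: real assume "0 < \<epsilon>"
  have "\<forall>\<^sub>F t in at_right 0. ereal (second_diff f x t / t\<^sup>2) \<le> ereal (K + \<epsilon>)"
    using assms[OF \<open>0 < \<epsilon>\<close>] eventually_at_right_less[of 0]
    by eventually_elim (simp add: divide_le_eq)
  then have "upper_D2 f x \<le> ereal (K + \<epsilon>)"
    unfolding upper_D2_second_diff by (rule Limsup_bounded)
  then show "upper_D2 f x \<le> ereal K + ereal \<epsilon>" by simp
qed

lemma continuous_on_open_local_bound: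
  fixes k :: "real \<Rightarrow> real"
  assumes "open I" "continuous_on I k" "x \<in> I" "0 < \<epsilon>"
  obtains r where "0 < r" "{x - r..x + r} \<subseteq> I" "\<And>y. y \<in> {x - r..x + r} \<Longrightarrow> k y \<le> k x + \<epsilon>"
proof -
  obtain r0 where r0: "0 < r0" "ball x r0 \<subseteq> I"
    using assms open_contains_ball by blast
  have "isCont k x"
    using assms continuous_on_eq_continuous_at by blast
  then obtain \<delta> where \<delta>: "0 < \<delta>" "\<And>y. dist y x < \<delta> \<Longrightarrow> dist (k y) (k x) < \<epsilon>"
    using \<open>0 < \<epsilon>\<close> unfolding continuous_at_eps_delta by blast
  show ?thesis
  proof (rule that[of "min r0 \<delta> / 2"])
    show "0 < min r0 \<delta> / 2" using r0 \<delta> by simp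
    show "{x - min r0 \<delta> / 2..x + min r0 \<delta> / 2} \<subseteq> I"
      using r0 \<delta> by (force simp: dist_real_def)
    show "k y \<le> k x + \<epsilon>" if "y \<in> {x - min r0 \<delta> / 2..x + min r0 \<delta> / 2}" for y
    proof -
      have "dist y x < \<delta>" using that \<delta>(1) by (auto simp: dist_real_def)
      then show ?thesis using \<delta>(2)[of y] by (simp add: dist_real_def)
    qed
  qed
qed

subsection \<open>Touching parabolas\<close>

lemma touching_parabola:
  fixes f :: "real \<Rightarrow> real"
  assumes h: "0 < h" and cf: "continuous_on {c - h..c + h} f" and gt: "M * h\<^sup>2 < second_diff f c h"
  obtains x0 B where "c - h < x0" "x0 < c + h"
    "\<And>y. y \<in> {c - h..c + h} \<Longrightarrow> f x0 + B * (y - x0) + M / 2 * (y - x0)\<^sup>2 \<le> f y"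
proof -
  define s where "s = (f (c + h) - f (c - h)) / (2 * h)"
  define w where "w y = f y - M / 2 * (y - c)\<^sup>2 - s * y" for y
  have cw: "continuous_on {c - h..c + h} w"
    unfolding w_def by (intro continuous_intros cf)
  obtain x0 where x0: "x0 \<in> {c - h..c + h}" "\<And>y. y \<in> {c - h..c + h} \<Longrightarrow> w x0 \<le> w y"
    using continuous_attains_inf[OF compact_Icc _ cw] h by auto
  have ends: "w (c + h) = w (c - h)"
    using h by (simp add: w_def s_def field_simps power2_eq_square)
  have "w (c + h) + w (c - h) - 2 * w c = second_diff f c h - M * h\<^sup>2"
    by (simp add: w_def second_diff_def algebra_simps power2_eq_square)
  then have "w c < w (c - h)" "w c < w (c + h)"
    using gt ends by linarith+
  then have "x0 \<noteq> c - h" "x0 \<noteq> c + h"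
    using x0(2)[of c] h by auto
  then have interior: "c - h < x0" "x0 < c + h"
    using x0(1) by auto
  define B where "B = s + M * (x0 - c)"
  have "f x0 + B * (y - x0) + M / 2 * (y - x0)\<^sup>2 = f y - (w y - w x0)" for y
    by (simp add: w_def B_def algebra_simps power2_eq_square)
  then show ?thesis
    using that[OF interior] x0(2) by (metis diff_ge_0_iff_ge diff_le_eq le_add_same_cancel1)
qed

lemma second_diff_superI_touching:
  assumes cf: "continuous_on I f"
    and touch: "\<And>x0 B M r. x0 \<in> I \<Longrightarrow> 0 < r \<Longrightarrow>
      (\<And>y. y \<in> ball x0 r \<Longrightarrow> f x0 + B * (y - x0) + M / 2 * (y - x0)\<^sup>2 \<le> f y) \<Longrightarrow> M \<le> k x0"
  shows "second_diff_super I f k"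
  unfolding second_diff_super_def
proof (intro allI impI, elim conjE)
  fix c h M
  assume h: "0 < h" and box: "{c - h..c + h} \<subseteq> I" and kM: "\<forall>y\<in>{c - h..c + h}. k y \<le> M"
  show "second_diff f c h \<le> M * h\<^sup>2"
  proof (rule ccontr)
    assume gt: "\<not> second_diff f c h \<le> M * h\<^sup>2"
    \<comment> \<open>a parabola slightly more convex than \<open>M\<close> still fits under the second difference\<close>
    define M' where "M' = (M + second_diff f c h / h\<^sup>2) / 2"
    have "M < second_diff f c h / h\<^sup>2"
      using gt h by (simp add: less_divide_eq)
    then have "M < M'" by (simp add: M'_def)
    have "M' * h\<^sup>2 = (M * h\<^sup>2 + second_diff f c h) / 2"
      using h by (simp add: M'_def field_simps)
    then have "M' * h\<^sup>2 < second_diff f c h"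
      using gt by (simp add: not_le)
    then obtain x0 B where x0: "c - h < x0" "x0 < c + h"
      and below: "\<And>y. y \<in> {c - h..c + h} \<Longrightarrow> f x0 + B * (y - x0) + M' / 2 * (y - x0)\<^sup>2 \<le> f y"
      using touching_parabola[OF h continuous_on_subset[OF cf box]] by blast
    define r where "r = min (x0 - (c - h)) (c + h - x0)"
    have r: "0 < r" "ball x0 r \<subseteq> {c - h..c + h}"
      using x0 by (auto simp: r_def dist_real_def)
    have "M' \<le> k x0"
    proof (rule touch[OF _ r(1)])
      show "x0 \<in> I" using box x0 by auto
      show "f x0 + B * (y - x0) + M' / 2 * (y - x0)\<^sup>2 \<le> f y" if "y \<in> ball x0 r" for y
        using below r(2) that by blast
    qed
    moreover have "k x0 \<le> M" using kM x0 by auto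
    ultimately show False using \<open>M < M'\<close> by simp
  qed
qed

lemma visc_super_imp_second_diff_super:
  assumes V: "visc_super I f g" and cf: "continuous_on I f"
  shows "second_diff_super I f (\<lambda>x. g (f x))"
proof (rule second_diff_superI_touching[OF cf])
  fix x0 B M r
  assume x0: "x0 \<in> I" and r: "0 < r"
    and below: "\<And>y. y \<in> ball x0 r \<Longrightarrow> f x0 + B * (y - x0) + M / 2 * (y - x0)\<^sup>2 \<le> f y"
  define q where "q y = f x0 + B * (y - x0) + M / 2 * (y - x0)\<^sup>2" for y
  have "smooth_on (ball x0 r) q" "deriv (deriv q) x0 = M"
    unfolding q_def[abs_def] by (rule smooth_on_quadratic)+
  moreover have "\<exists>e>0. \<forall>y\<in>ball x0 r. \<bar>y - x0\<bar> < e \<longrightarrow> q y - f y \<le> q x0 - f x0"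
    using below by (intro exI[of _ 1]) (simp add: q_def)
  ultimately show "M \<le> g (f x0)"
    using V[unfolded visc_super_def, rule_format, OF x0, of "ball x0 r" q] r by auto
qed

lemma upper_D2_le_imp_second_diff_super:
  assumes D: "\<forall>x\<in>I. upper_D2 f x \<le> ereal (k x)" and cf: "continuous_on I f"
  shows "second_diff_super I f k"
proof (rule second_diff_superI_touching[OF cf])
  fix x0 B M r
  assume x0: "x0 \<in> I" and r: "0 < r"
    and below: "\<And>y. y \<in> ball x0 r \<Longrightarrow> f x0 + B * (y - x0) + M / 2 * (y - x0)\<^sup>2 \<le> f y"
  have "\<forall>\<^sub>F t in at_right 0. ereal M \<le> ereal (second_diff f x0 t / t\<^sup>2)"
    unfolding eventually_at_right_field
  proof (intro exI[of _ r] conjI allI impI)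
    fix t :: real assume t: "0 < t" "t < r"
    have "M * t\<^sup>2 = second_diff (\<lambda>y. f x0 + B * (y - x0) + M / 2 * (y - x0)\<^sup>2) x0 t"
      by (simp add: second_diff_def power2_eq_square field_simps)
    also have "\<dots> \<le> second_diff f x0 t"
      using below[of "x0 + t"] below[of "x0 - t"] t by (simp add: second_diff_def dist_real_def)
    finally show "ereal M \<le> ereal (second_diff f x0 t / t\<^sup>2)"
      using t by (simp add: le_divide_eq)
  qed (use r in simp)
  then have "ereal M \<le> upper_D2 f x0"
    unfolding upper_D2_second_diff by (intro le_Limsup) simp_all
  then show "M \<le> k x0"
    using D x0 by (metis ereal_less_eq(3) order_trans)
qed

lemma second_diff_super_imp_upper_D2_le:
  assumes P: "second_diff_super I f k" and I: "open I" and ck: "continuous_on I k" and x: "x \<in> I"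
  shows "upper_D2 f x \<le> ereal (k x)"
proof (rule upper_D2_leI)
  fix \<epsilon> :: real assume "0 < \<epsilon>"
  then obtain r where r: "0 < r" "{x - r..x + r} \<subseteq> I" "\<And>y. y \<in> {x - r..x + r} \<Longrightarrow> k y \<le> k x + \<epsilon>"
    using continuous_on_open_local_bound[OF I ck x] by blast
  show "\<forall>\<^sub>F t in at_right 0. second_diff f x t \<le> (k x + \<epsilon>) * t\<^sup>2"
    unfolding eventually_at_right_field
  proof (intro exI[of _ r] conjI allI impI)
    fix t :: real assume t: "0 < t" "t < r"
    then have "{x - t..x + t} \<subseteq> {x - r..x + r}" by auto
    then show "second_diff f x t \<le> (k x + \<epsilon>) * t\<^sup>2"
      using P r t unfolding second_diff_super_def by (meson order_trans subsetD)
  qed (use r in simp)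
qed

lemma upper_D2_le_imp_visc_super:
  assumes D: "\<forall>x\<in>I. upper_D2 f x \<le> ereal (g (f x))"
  shows "visc_super I f g"
  unfolding visc_super_def
proof (intro ballI allI impI, elim conjE exE)
  fix x \<phi> U e
  assume x: "x \<in> I" and U: "open U" "x \<in> U" and sm: "smooth_on U \<phi>" and e: "0 < e"
    and max: "\<forall>y\<in>U. \<bar>y - x\<bar> < e \<longrightarrow> \<phi> y - f y \<le> \<phi> x - f x"
  obtain r where r: "0 < r" "ball x r \<subseteq> U"
    using U open_contains_ball by blast
  have "\<forall>\<^sub>F t in at_right 0. ereal (second_diff \<phi> x t / t\<^sup>2) \<le> ereal (second_diff f x t / t\<^sup>2)"
    unfolding eventually_at_right_field
  proof (intro exI[of _ "min r e"] conjI allI impI)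
    fix t :: real assume t: "0 < t" "t < min r e"
    then have "x + t \<in> U" "x - t \<in> U"
      using r by (auto simp: dist_real_def)
    then have "\<phi> (x + t) - f (x + t) \<le> \<phi> x - f x" "\<phi> (x - t) - f (x - t) \<le> \<phi> x - f x"
      using max t by auto
    then have "second_diff \<phi> x t \<le> second_diff f x t"
      by (simp add: second_diff_def)
    then show "ereal (second_diff \<phi> x t / t\<^sup>2) \<le> ereal (second_diff f x t / t\<^sup>2)"
      by (simp add: divide_right_mono)
  qed (use r e in simp)
  then have "Limsup (at_right 0) (\<lambda>t. ereal (second_diff \<phi> x t / t\<^sup>2)) \<le> upper_D2 f x"
    unfolding upper_D2_second_diff by (rule Limsup_mono)
  moreover have "Limsup (at_right 0) (\<lambda>t. ereal (second_diff \<phi> x t / t\<^sup>2)) = ereal (deriv (deriv \<phi>) x)"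
    using second_diff_quotient_tendsto[OF sm U] by (intro lim_imp_Limsup) auto
  ultimately show "deriv (deriv \<phi>) x \<le> g (f x)"
    using D x by (metis ereal_less_eq(3) order_trans)
qed

lemma field_le_epsilon_scaled:
  fixes a b C :: real
  assumes "0 \<le> C" "\<And>\<epsilon>. 0 < \<epsilon> \<Longrightarrow> a \<le> b + \<epsilon> * C"
  shows "a \<le> b"
proof (rule field_le_epsilon)
  fix e :: real assume "0 < e"
  then have "a \<le> b + e / (C + 1) * C"
    using assms by (intro assms(2)) (simp add: add_nonneg_pos)
  also have "e / (C + 1) * C \<le> e"
    using \<open>0 < e\<close> assms(1) by (simp add: field_simps)
  finally show "a \<le> b + e" by simp
qed

lemma integral_eq_integral_support:
  fixes F :: "real \<Rightarrow> real"
  assumes "continuous_on {a..b} F" "\<And>y. y \<notin> {a..b} \<Longrightarrow> F y = 0" "{a..b} \<subseteq> S"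
  shows "integral S F = integral {a..b} F"
proof -
  have "(F has_integral integral {a..b} F) {a..b}"
    using integrable_continuous_interval[OF assms(1)] by (simp add: integrable_integral)
  then have "(F has_integral integral {a..b} F) S"
    by (rule has_integral_on_superset) (use assms in auto)
  then show ?thesis by (rule integral_unique)
qed

lemma has_integral_of_real_derivative:
  fixes G g :: "real \<Rightarrow> real"
  assumes "A \<le> B" "\<And>y. y \<in> {A..B} \<Longrightarrow> (G has_real_derivative g y) (at y)"
  shows "(g has_integral G B - G A) {A..B}"
  using assms by (intro fundamental_theorem_of_calculus)
    (auto simp: has_real_derivative_iff_has_vector_derivative[symmetric] intro: has_field_derivative_at_within)

lemma integral_by_parts_twice:
  fixes q q' q'' T T' T'' :: "real \<Rightarrow> real"
  assumes AB: "A \<le> B"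
    and dT: "\<And>y. y \<in> {A..B} \<Longrightarrow> (T has_real_derivative T' y) (at y)"
    and dT': "\<And>y. y \<in> {A..B} \<Longrightarrow> (T' has_real_derivative T'' y) (at y)"
    and dq: "\<And>y. y \<in> {A..B} \<Longrightarrow> (q has_real_derivative q' y) (at y)"
    and dq': "\<And>y. y \<in> {A..B} \<Longrightarrow> (q' has_real_derivative q'' y) (at y)"
    and cq'': "continuous_on {A..B} q''"
    and ends: "T A = 0" "T B = 0" "T' A = 0" "T' B = 0"
  shows "integral {A..B} (\<lambda>y. q y * T'' y) = integral {A..B} (\<lambda>y. q'' y * T y)"
proof -
  define G where "G y = q y * T' y - q' y * T y" for y
  have "((\<lambda>y. q y * T'' y - q'' y * T y) has_integral G B - G A) {A..B}"
  proof (rule has_integral_of_real_derivative[OF AB])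
    fix y assume y: "y \<in> {A..B}"
    have "(G has_real_derivative q' y * T' y + T'' y * q y - (q'' y * T y + T' y * q' y)) (at y)"
      unfolding G_def[abs_def]
      using DERIV_diff[OF DERIV_mult[OF dq[OF y] dT'[OF y]] DERIV_mult[OF dq'[OF y] dT[OF y]]] .
    then show "(G has_real_derivative q y * T'' y - q'' y * T y) (at y)"
      by (simp add: algebra_simps)
  qed
  moreover have "G B - G A = 0"
    using ends by (simp add: G_def)
  moreover have "continuous_on {A..B} T"
    using dT by (intro continuous_at_imp_continuous_on ballI DERIV_isCont) blast
  then have "((\<lambda>y. q'' y * T y) has_integral integral {A..B} (\<lambda>y. q'' y * T y)) {A..B}"
    using cq'' by (intro integrable_integral integrable_continuous_interval continuous_on_mult)
  ultimately have "((\<lambda>y. (q y * T'' y - q'' y * T y) + q'' y * T y) has_integral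
      0 + integral {A..B} (\<lambda>y. q'' y * T y)) {A..B}"
    by (intro has_integral_add) auto
  then show ?thesis by (simp add: integral_unique)
qed

lemma deriv_eq_0_outside_Icc:
  fixes \<phi> :: "real \<Rightarrow> real"
  assumes "\<And>y. y \<notin> {a..b} \<Longrightarrow> \<phi> y = 0" "x \<notin> {a..b}"
  shows "deriv \<phi> x = 0"
proof -
  have "(\<phi> has_real_derivative 0) (at x)"
    by (rule has_field_derivative_transform_within_open[of "\<lambda>_. 0" 0 x "- {a..b}"])
      (use assms in auto)
  then show ?thesis by (rule DERIV_imp_deriv)
qed

lemma deriv2_eq_0_outside_Icc:
  fixes \<phi> :: "real \<Rightarrow> real"
  assumes "\<And>y. y \<notin> {a..b} \<Longrightarrow> \<phi> y = 0" "x \<notin> {a..b}"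
  shows "deriv (deriv \<phi>) x = 0"
  using deriv_eq_0_outside_Icc[of a b "deriv \<phi>" x] deriv_eq_0_outside_Icc[of a b \<phi>] assms by blast

lemma test_fun_support_interval:
  assumes \<phi>: "test_fun I \<phi>" and I: "open I" "is_interval I" "I \<noteq> {}"
  obtains a b r where "0 < r" "{a - r..b + r} \<subseteq> I" "\<And>y. y \<notin> {a..b} \<Longrightarrow> \<phi> y = 0"
proof -
  obtain x0 where x0: "x0 \<in> I" using I(3) by blast
  \<comment> \<open>adding a point of \<open>I\<close> keeps the support hull nonempty\<close>
  define K where "K = insert x0 (closure {x. \<phi> x \<noteq> 0})"
  have K: "compact K" "K \<subseteq> I" "K \<noteq> {}"
    using \<phi> x0 unfolding K_def test_fun_def by (simp_all add: compact_insert)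
  have bdd: "bdd_below K" "bdd_above K"
    using compact_imp_bounded[OF K(1)] by (simp_all add: bounded_imp_bdd_below bounded_imp_bdd_above)
  define a where "a = Inf K"
  define b where "b = Sup K"
  have "a \<in> K" "b \<in> K"
    unfolding a_def b_def
    using closed_contains_Inf[OF K(3) bdd(1)] closed_contains_Sup[OF K(3) bdd(2)]
      compact_imp_closed[OF K(1)] by simp_all
  then have "a \<in> I" "b \<in> I" using K(2) by blast+
  then obtain ra rb where ra: "0 < ra" "ball a ra \<subseteq> I" and rb: "0 < rb" "ball b rb \<subseteq> I"
    using open_contains_ball_eq[OF I(1)] by blast
  define r where "r = min ra rb / 2"
  have "a - r \<in> ball a ra" "b + r \<in> ball b rb"
    using ra rb by (simp_all add: r_def dist_real_def)
  then have "a - r \<in> I" "b + r \<in> I"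
    using ra rb by blast+
  then have "{a - r..b + r} \<subseteq> I"
    using I(2) unfolding is_interval_1 by (meson atLeastAtMost_iff subsetI)
  moreover have "\<phi> y = 0" if "y \<notin> {a..b}" for y
  proof (rule ccontr)
    assume "\<phi> y \<noteq> 0"
    then have "y \<in> K" using closure_subset[of "{x. \<phi> x \<noteq> 0}"] unfolding K_def by blast
    then have "a \<le> y" "y \<le> b"
      unfolding a_def b_def using bdd by (simp_all add: cInf_lower cSup_upper)
    then show False using that by simp
  qed
  moreover have "0 < r" using ra rb by (simp add: r_def)
  ultimately show ?thesis using that by blast
qed

lemma integral_mult_second_diff_swap:
  fixes f \<phi> :: "real \<Rightarrow> real"
  assumes t: "0 \<le> t" and sub: "{a - t..b + t} \<subseteq> {A..B}"
    and cf: "continuous_on {A..B} f" and c\<phi>: "continuous_on UNIV \<phi>"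
    and supp: "\<And>y. y \<notin> {a..b} \<Longrightarrow> \<phi> y = 0"
  shows "integral {A..B} (\<lambda>y. f y * second_diff \<phi> y t) = integral {a..b} (\<lambda>y. \<phi> y * second_diff f y t)"
proof -
  define X where "X s = integral {a..b} (\<lambda>y. f (y - s) * \<phi> y)" for s
  have base: "((\<lambda>y. f (y - s) * \<phi> y) has_integral X s) {a..b}" if s: "\<bar>s\<bar> \<le> t" for s
  proof -
    have "continuous_on {a..b} (\<lambda>y. f (y - s))"
      by (rule continuous_on_compose2[OF cf]) (use s sub in \<open>auto intro!: continuous_intros\<close>)
    then have "continuous_on {a..b} (\<lambda>y. f (y - s) * \<phi> y)"
      by (intro continuous_intros continuous_on_subset[OF c\<phi>]) auto
    then show ?thesis
      unfolding X_def using integrable_continuous_interval integrable_integral by blast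
  qed
  have shifted: "((\<lambda>y. f y * \<phi> (y + s)) has_integral X s) {A..B}" if s: "\<bar>s\<bar> \<le> t" for s
  proof -
    have "((\<lambda>y. f y * \<phi> (y + s)) has_integral X s) {a - s..b - s}"
      using base[OF s] has_integral_shift_Icc_real[of "\<lambda>y. f (y - s) * \<phi> y" s "X s" "a - s" "b - s"]
      by (simp add: o_def add.commute)
    then show ?thesis
      by (rule has_integral_on_superset) (use s sub supp in \<open>auto simp: algebra_simps\<close>)
  qed
  have "((\<lambda>y. f y * \<phi> (y + t) + f y * \<phi> (y + - t) - 2 * (f y * \<phi> (y + 0)))
      has_integral X t + X (- t) - 2 * X 0) {A..B}"
    using t by (intro has_integral_diff has_integral_add has_integral_mult_right shifted) auto
  moreover have "((\<lambda>y. f (y - - t) * \<phi> y + f (y - t) * \<phi> y - 2 * (f (y - 0) * \<phi> y))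
      has_integral X (- t) + X t - 2 * X 0) {a..b}"
    using t by (intro has_integral_diff has_integral_add has_integral_mult_right base) auto
  ultimately show ?thesis
    by (simp add: second_diff_def algebra_simps integral_unique)
qed

subsection \<open>From second differences to the distributional inequality\<close>

lemma second_diff_super_uniform:
  assumes P: "second_diff_super I f k" and r: "0 < r" and box: "{a - r..b + r} \<subseteq> I"
    and ck: "continuous_on {a - r..b + r} k" and \<epsilon>: "0 < \<epsilon>"
  obtains \<delta> where "0 < \<delta>"
    "\<And>t y. 0 < t \<Longrightarrow> t < \<delta> \<Longrightarrow> y \<in> {a..b} \<Longrightarrow> second_diff f y t \<le> (k y + \<epsilon>) * t\<^sup>2"
proof -
  obtain \<delta>0 where \<delta>0: "0 < \<delta>0"
    "\<And>y z. y \<in> {a - r..b + r} \<Longrightarrow> z \<in> {a - r..b + r} \<Longrightarrow> dist z y < \<delta>0 \<Longrightarrow> dist (k z) (k y) < \<epsilon>"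
    using compact_uniformly_continuous[OF ck compact_Icc] \<epsilon>
    unfolding uniformly_continuous_on_def by metis
  show ?thesis
  proof (rule that[of "min r \<delta>0"])
    show "0 < min r \<delta>0" using r \<delta>0 by simp
    fix t y assume t: "0 < t" "t < min r \<delta>0" and y: "y \<in> {a..b}"
    have sub: "{y - t..y + t} \<subseteq> {a - r..b + r}"
      using t y by auto
    have "k z \<le> k y + \<epsilon>" if "z \<in> {y - t..y + t}" for z
    proof -
      have "dist (k z) (k y) < \<epsilon>"
        using \<delta>0(2)[of y z] sub that y t by (auto simp: dist_real_def)
      then show ?thesis by (simp add: dist_real_def)
    qed
    then show "second_diff f y t \<le> (k y + \<epsilon>) * t\<^sup>2"
      using P sub box t unfolding second_diff_super_def by blast
  qed
qed

lemma integral_deriv2_le_second_diff: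
  fixes f \<phi> \<phi>1 \<phi>2 :: "real \<Rightarrow> real"
  assumes \<epsilon>: "0 < \<epsilon>" and cf: "continuous_on {A..B} f"
    and d1: "\<And>y. (\<phi> has_real_derivative \<phi>1 y) (at y)"
    and d2: "\<And>y. (\<phi>1 has_real_derivative \<phi>2 y) (at y)"
    and c2: "\<And>y. isCont \<phi>2 y"
  obtains \<delta> where "0 < \<delta>"
    "\<And>t. 0 < t \<Longrightarrow> t < \<delta> \<Longrightarrow> t\<^sup>2 * integral {A..B} (\<lambda>y. f y * \<phi>2 y)
      \<le> integral {A..B} (\<lambda>y. f y * second_diff \<phi> y t) + \<epsilon> * t\<^sup>2 * integral {A..B} (\<lambda>y. \<bar>f y\<bar>)"
proof -
  have c\<phi>: "continuous_on S \<phi>" for S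
    by (rule continuous_at_imp_continuous_on) (use d1 DERIV_isCont in blast)
  have c\<phi>2: "continuous_on S \<phi>2" for S
    by (rule continuous_at_imp_continuous_on) (use c2 in blast)
  have c\<phi>_shift: "continuous_on S (\<lambda>y. \<phi> (y + s))" for S s
    by (rule continuous_on_compose2[OF c\<phi>[of UNIV]]) (auto intro!: continuous_intros)
  have c\<Delta>\<phi>: "continuous_on S (\<lambda>y. second_diff \<phi> y t)" for S t
    unfolding second_diff_def using c\<phi>_shift[of S t] c\<phi>_shift[of S "- t"] c\<phi>[of S]
    by (intro continuous_intros) simp_all
  obtain \<delta> where \<delta>: "0 < \<delta>"
    "\<And>t y. 0 < t \<Longrightarrow> t < \<delta> \<Longrightarrow> y \<in> {A..B} \<Longrightarrow> \<bar>second_diff \<phi> y t - t\<^sup>2 * \<phi>2 y\<bar> \<le> \<epsilon> * t\<^sup>2"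
    using second_diff_uniform_approx[OF zero_less_one \<epsilon>, of A B \<phi> \<phi>1 \<phi>2] d1 d2 c\<phi>2 by blast
  show ?thesis
  proof (rule that[OF \<delta>(1)])
    fix t :: real assume t: "0 < t" "t < \<delta>"
    have i\<Delta>\<phi>: "(\<lambda>y. f y * second_diff \<phi> y t) integrable_on {A..B}"
      using cf c\<Delta>\<phi> by (intro integrable_continuous_interval continuous_intros)
    have i_abs_f: "(\<lambda>y. \<epsilon> * t\<^sup>2 * \<bar>f y\<bar>) integrable_on {A..B}"
      using cf by (intro integrable_continuous_interval continuous_intros)
    have "t\<^sup>2 * integral {A..B} (\<lambda>y. f y * \<phi>2 y) = integral {A..B} (\<lambda>y. t\<^sup>2 * (f y * \<phi>2 y))"
      by simp
    also have "\<dots> \<le> integral {A..B} (\<lambda>y. f y * second_diff \<phi> y t + \<epsilon> * t\<^sup>2 * \<bar>f y\<bar>)"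
    proof (rule integral_le)
      show "(\<lambda>y. t\<^sup>2 * (f y * \<phi>2 y)) integrable_on {A..B}"
        using cf c\<phi>2 by (intro integrable_continuous_interval continuous_intros)
      show "(\<lambda>y. f y * second_diff \<phi> y t + \<epsilon> * t\<^sup>2 * \<bar>f y\<bar>) integrable_on {A..B}"
        using i\<Delta>\<phi> i_abs_f by (rule integrable_add)
      show "t\<^sup>2 * (f y * \<phi>2 y) \<le> f y * second_diff \<phi> y t + \<epsilon> * t\<^sup>2 * \<bar>f y\<bar>" if "y \<in> {A..B}" for y
      proof -
        have "f y * (t\<^sup>2 * \<phi>2 y - second_diff \<phi> y t) \<le> \<bar>f y\<bar> * \<bar>second_diff \<phi> y t - t\<^sup>2 * \<phi>2 y\<bar>"
          by (metis abs_ge_self abs_minus_commute abs_mult)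
        also have "\<dots> \<le> \<bar>f y\<bar> * (\<epsilon> * t\<^sup>2)"
          using \<delta>(2)[OF t that] by (intro mult_left_mono) auto
        finally show ?thesis by (simp add: algebra_simps)
      qed
    qed
    also have "\<dots> = integral {A..B} (\<lambda>y. f y * second_diff \<phi> y t) + \<epsilon> * t\<^sup>2 * integral {A..B} (\<lambda>y. \<bar>f y\<bar>)"
      by (simp add: integral_add[OF i\<Delta>\<phi> i_abs_f])
    finally show "t\<^sup>2 * integral {A..B} (\<lambda>y. f y * \<phi>2 y)
      \<le> integral {A..B} (\<lambda>y. f y * second_diff \<phi> y t) + \<epsilon> * t\<^sup>2 * integral {A..B} (\<lambda>y. \<bar>f y\<bar>)" .
  qed
qed

lemma integral_second_diff_le_of_second_diff_super:
  assumes P: "second_diff_super I f k" and r: "0 < r" and JI: "{a - r..b + r} \<subseteq> I"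
    and cf: "continuous_on {a - r..b + r} f" and ck: "continuous_on {a - r..b + r} k"
    and c\<phi>: "continuous_on {a..b} \<phi>" and \<phi>_nonneg: "\<And>y. 0 \<le> \<phi> y" and \<epsilon>: "0 < \<epsilon>"
  obtains \<delta> where "0 < \<delta>"
    "\<And>t. 0 < t \<Longrightarrow> t < \<delta> \<Longrightarrow> integral {a..b} (\<lambda>y. \<phi> y * second_diff f y t)
      \<le> t\<^sup>2 * (integral {a..b} (\<lambda>y. k y * \<phi> y) + \<epsilon> * integral {a..b} \<phi>)"
proof -
  obtain \<delta> where \<delta>: "0 < \<delta>"
    "\<And>t y. 0 < t \<Longrightarrow> t < \<delta> \<Longrightarrow> y \<in> {a..b} \<Longrightarrow> second_diff f y t \<le> (k y + \<epsilon>) * t\<^sup>2"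
    using second_diff_super_uniform[OF P r JI ck \<epsilon>] by blast
  have ckab: "continuous_on {a..b} k"
    using continuous_on_subset[OF ck] r by auto
  show ?thesis
  proof (rule that[of "min r \<delta>"])
    show "0 < min r \<delta>" using r \<delta> by simp
    fix t :: real assume t: "0 < t" "t < min r \<delta>"
    have "continuous_on {a..b} (\<lambda>y. f (y + s))" if "\<bar>s\<bar> \<le> t" for s
      by (rule continuous_on_compose2[OF cf]) (use that t in \<open>auto intro!: continuous_intros\<close>)
    from this[of t] this[of "- t"]
    have "continuous_on {a..b} (\<lambda>y. \<phi> y * second_diff f y t)"
      unfolding second_diff_def using t c\<phi> continuous_on_subset[OF cf, of "{a..b}"] r
      by (auto intro!: continuous_intros)
    moreover have "continuous_on {a..b} (\<lambda>y. t\<^sup>2 * (k y * \<phi> y) + \<epsilon> * t\<^sup>2 * \<phi> y)"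
      by (intro continuous_on_add continuous_on_mult continuous_on_const ckab c\<phi>)
    moreover have "\<phi> y * second_diff f y t \<le> t\<^sup>2 * (k y * \<phi> y) + \<epsilon> * t\<^sup>2 * \<phi> y" if "y \<in> {a..b}" for y
      using mult_left_mono[OF \<delta>(2)[of t y] \<phi>_nonneg[of y]] t that by (simp add: algebra_simps)
    ultimately have "integral {a..b} (\<lambda>y. \<phi> y * second_diff f y t)
        \<le> integral {a..b} (\<lambda>y. t\<^sup>2 * (k y * \<phi> y) + \<epsilon> * t\<^sup>2 * \<phi> y)"
      by (intro integral_le integrable_continuous_interval)
    also have "\<dots> = t\<^sup>2 * (integral {a..b} (\<lambda>y. k y * \<phi> y) + \<epsilon> * integral {a..b} \<phi>)"
    proof -
      have ck\<phi>: "continuous_on {a..b} (\<lambda>y. k y * \<phi> y)"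
        using ckab c\<phi> by (rule continuous_on_mult)
      have i1: "(\<lambda>y. t\<^sup>2 * (k y * \<phi> y)) integrable_on {a..b}"
        by (rule integrable_continuous_interval[OF continuous_on_mult[OF continuous_on_const ck\<phi>]])
      have i2: "(\<lambda>y. \<epsilon> * t\<^sup>2 * \<phi> y) integrable_on {a..b}"
        by (rule integrable_continuous_interval[OF continuous_on_mult[OF continuous_on_const c\<phi>]])
      show ?thesis
        unfolding integral_add[OF i1 i2] by (simp add: ring_distribs)
    qed
    finally show "integral {a..b} (\<lambda>y. \<phi> y * second_diff f y t)
      \<le> t\<^sup>2 * (integral {a..b} (\<lambda>y. k y * \<phi> y) + \<epsilon> * integral {a..b} \<phi>)" .
  qed
qed

lemma second_diff_super_integral_approx:
  assumes P: "second_diff_super I f k" and r: "0 < r" and JI: "{a - r..b + r} \<subseteq> I"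
    and cf: "continuous_on I f" and ck: "continuous_on I k"
    and sm: "smooth_on UNIV \<phi>" and supp: "\<And>y. y \<notin> {a..b} \<Longrightarrow> \<phi> y = 0"
    and \<phi>_nonneg: "\<And>y. 0 \<le> \<phi> y" and \<epsilon>: "0 < \<epsilon>"
  shows "integral {a..b} (\<lambda>y. f y * deriv (deriv \<phi>) y) \<le> integral {a..b} (\<lambda>y. k y * \<phi> y)
    + \<epsilon> * (integral {a..b} \<phi> + integral {a - r..b + r} (\<lambda>y. \<bar>f y\<bar>))"
proof -
  define J where "J = {a - r..b + r}"
  define \<phi>2 where "\<phi>2 = deriv (deriv \<phi>)"
  have d1: "(\<phi> has_real_derivative deriv \<phi> y) (at y)"
    and d2: "(deriv \<phi> has_real_derivative \<phi>2 y) (at y)" and c2: "isCont \<phi>2 y" for y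
    using smooth_onD[OF sm] by (simp_all add: \<phi>2_def)
  have c\<phi>: "continuous_on S \<phi>" for S
    by (rule continuous_at_imp_continuous_on) (use d1 DERIV_isCont in blast)
  have cfJ: "continuous_on J f" and ckJ: "continuous_on J k"
    using continuous_on_subset[OF cf JI] continuous_on_subset[OF ck JI] by (simp_all add: J_def)
  obtain \<delta>1 where \<delta>1: "0 < \<delta>1" "\<And>t. 0 < t \<Longrightarrow> t < \<delta>1 \<Longrightarrow> t\<^sup>2 * integral J (\<lambda>y. f y * \<phi>2 y)
      \<le> integral J (\<lambda>y. f y * second_diff \<phi> y t) + \<epsilon> * t\<^sup>2 * integral J (\<lambda>y. \<bar>f y\<bar>)"
    using integral_deriv2_le_second_diff[OF \<epsilon> cfJ[unfolded J_def] d1 d2 c2] unfolding J_def by blast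
  obtain \<delta>2 where \<delta>2: "0 < \<delta>2" "\<And>t. 0 < t \<Longrightarrow> t < \<delta>2 \<Longrightarrow> integral {a..b} (\<lambda>y. \<phi> y * second_diff f y t)
      \<le> t\<^sup>2 * (integral {a..b} (\<lambda>y. k y * \<phi> y) + \<epsilon> * integral {a..b} \<phi>)"
    using integral_second_diff_le_of_second_diff_super[OF P r JI _ _ c\<phi> \<phi>_nonneg \<epsilon>] cfJ ckJ
    unfolding J_def by blast
  define t where "t = min r (min \<delta>1 \<delta>2) / 2"
  have t: "0 < t" "t < r" "t < \<delta>1" "t < \<delta>2"
    using r \<delta>1 \<delta>2 by (auto simp: t_def)
  have "integral J (\<lambda>y. f y * \<phi>2 y) = integral {a..b} (\<lambda>y. f y * \<phi>2 y)"
  proof (rule integral_eq_integral_support)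
    have "continuous_on {a..b} \<phi>2"
      by (rule continuous_at_imp_continuous_on) (use c2 in blast)
    then show "continuous_on {a..b} (\<lambda>y. f y * \<phi>2 y)"
      using continuous_on_subset[OF cfJ, of "{a..b}"] r unfolding J_def by (intro continuous_on_mult) auto
    show "f y * \<phi>2 y = 0" if "y \<notin> {a..b}" for y
      unfolding \<phi>2_def using deriv2_eq_0_outside_Icc[OF supp that] by simp
  qed (use r in \<open>auto simp: J_def\<close>)
  then have "t\<^sup>2 * integral {a..b} (\<lambda>y. f y * \<phi>2 y) = t\<^sup>2 * integral J (\<lambda>y. f y * \<phi>2 y)"
    by simp
  also have "\<dots> \<le> integral J (\<lambda>y. f y * second_diff \<phi> y t) + \<epsilon> * t\<^sup>2 * integral J (\<lambda>y. \<bar>f y\<bar>)"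
    using \<delta>1(2)[OF t(1,3)] .
  also have "integral J (\<lambda>y. f y * second_diff \<phi> y t) = integral {a..b} (\<lambda>y. \<phi> y * second_diff f y t)"
    using t cfJ c\<phi> supp unfolding J_def by (intro integral_mult_second_diff_swap) auto
  also have "\<dots> \<le> t\<^sup>2 * (integral {a..b} (\<lambda>y. k y * \<phi> y) + \<epsilon> * integral {a..b} \<phi>)"
    using \<delta>2(2)[OF t(1,4)] .
  finally have "t\<^sup>2 * integral {a..b} (\<lambda>y. f y * \<phi>2 y) \<le> t\<^sup>2 * (integral {a..b} (\<lambda>y. k y * \<phi> y)
      + \<epsilon> * (integral {a..b} \<phi> + integral J (\<lambda>y. \<bar>f y\<bar>)))"
    by (simp add: algebra_simps)
  then show ?thesis using t(1) by (simp add: \<phi>2_def J_def)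
qed

lemma second_diff_super_imp_distr_ineq:
  assumes P: "second_diff_super I f k" and I: "open I" "is_interval I" "I \<noteq> {}"
    and cf: "continuous_on I f" and ck: "continuous_on I k"
    and \<phi>: "test_fun I \<phi>" and \<phi>_nonneg: "\<And>x. 0 \<le> \<phi> x"
  shows "integral I (\<lambda>x. f x * deriv (deriv \<phi>) x) \<le> integral I (\<lambda>x. k x * \<phi> x)"
proof -
  obtain a b r where r: "0 < r" and JI: "{a - r..b + r} \<subseteq> I" and supp: "\<And>y. y \<notin> {a..b} \<Longrightarrow> \<phi> y = 0"
    using test_fun_support_interval[OF \<phi> I] by metis
  have sm: "smooth_on UNIV \<phi>" using \<phi> by (simp add: test_fun_def)
  have c\<phi>: "continuous_on S \<phi>" and c\<phi>2: "continuous_on S (deriv (deriv \<phi>))" for S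
    using smooth_onD[OF sm] DERIV_isCont by (blast intro: continuous_at_imp_continuous_on)+
  have abJ: "{a..b} \<subseteq> {a - r..b + r}" using r by auto
  have cfab: "continuous_on {a..b} f" and ckab: "continuous_on {a..b} k"
    using continuous_on_subset[OF cf] continuous_on_subset[OF ck] abJ JI by blast+
  have "(\<lambda>y. \<bar>f y\<bar>) integrable_on {a - r..b + r}"
    using continuous_on_subset[OF cf JI] by (intro integrable_continuous_interval continuous_intros)
  moreover have "\<phi> integrable_on {a..b}"
    using c\<phi> by (rule integrable_continuous_interval)
  ultimately have "0 \<le> integral {a..b} \<phi> + integral {a - r..b + r} (\<lambda>y. \<bar>f y\<bar>)"
    using \<phi>_nonneg by (intro add_nonneg_nonneg integral_nonneg) auto
  from field_le_epsilon_scaled[OF this second_diff_super_integral_approx[OF P r JI cf ck sm supp \<phi>_nonneg]]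
  have "integral {a..b} (\<lambda>y. f y * deriv (deriv \<phi>) y) \<le> integral {a..b} (\<lambda>y. k y * \<phi> y)" .
  moreover have "integral I (\<lambda>y. f y * deriv (deriv \<phi>) y) = integral {a..b} (\<lambda>y. f y * deriv (deriv \<phi>) y)"
  proof (rule integral_eq_integral_support)
    show "f y * deriv (deriv \<phi>) y = 0" if "y \<notin> {a..b}" for y
      using deriv2_eq_0_outside_Icc[OF supp that] by simp
  qed (use cfab c\<phi>2 abJ JI in \<open>auto intro: continuous_on_mult\<close>)
  moreover have "integral I (\<lambda>y. k y * \<phi> y) = integral {a..b} (\<lambda>y. k y * \<phi> y)"
    using ckab c\<phi> supp abJ JI by (intro integral_eq_integral_support continuous_intros) auto
  ultimately show ?thesis by simp
qed

subsection \<open>A smooth bump function\<close>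

definition bump_q :: "real \<Rightarrow> real" where
  "bump_q x = x * (1 - x)"

text \<open>By the quotient rule,
  \<open>(P e\<^sup>-\<^sup>1\<^sup>/\<^sup>q / q\<^sup>2\<^sup>n)' = (P' q\<^sup>2 + P q' (1 - 2n q)) e\<^sup>-\<^sup>1\<^sup>/\<^sup>q / q\<^sup>2\<^sup>n\<^sup>+\<^sup>2\<close> for \<open>q = bump_q\<close>.\<close>
fun bump_poly :: "nat \<Rightarrow> real poly" where
  "bump_poly 0 = 1"
| "bump_poly (Suc n) = pderiv (bump_poly n) * [:0, 1, -1:]\<^sup>2
     + bump_poly n * [:1, -2:] * (1 - smult (2 * real n) [:0, 1, -1:])"

definition bump_deriv :: "nat \<Rightarrow> real \<Rightarrow> real" where
  "bump_deriv n x = (if 0 < x \<and> x < 1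
     then poly (bump_poly n) x * exp (- 1 / bump_q x) / bump_q x ^ (2 * n) else 0)"

lemma tendsto_exp_neg_inverse_div_power: "((\<lambda>z::real. exp (- 1 / z) / z ^ m) \<longlongrightarrow> 0) (at_right 0)"
proof -
  have "((\<lambda>z. inverse z ^ m / exp (inverse z)) \<longlongrightarrow> 0) (at_right (0::real))"
    using filterlim_compose[OF tendsto_power_div_exp_0[of m] filterlim_inverse_at_top_right] by simp
  moreover have "\<forall>\<^sub>F z in at_right (0::real). inverse z ^ m / exp (inverse z) = exp (- 1 / z) / z ^ m"
  proof (rule eventually_at_rightI[of 0 1])
    fix z :: real assume "z \<in> {0<..<1}"
    have "exp (- 1 / z) = inverse (exp (inverse z))"
      by (simp add: exp_minus inverse_eq_divide)
    then show "inverse z ^ m / exp (inverse z) = exp (- 1 / z) / z ^ m"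
      by (simp add: power_inverse divide_inverse mult.commute)
  qed simp
  ultimately show ?thesis using tendsto_cong by fastforce
qed

lemma tendsto_poly_bump:
  fixes p :: "real poly"
  assumes "filterlim bump_q (at_right 0) F" "((\<lambda>x. x) \<longlongrightarrow> a) F"
  shows "((\<lambda>x. poly p x * exp (- 1 / bump_q x) / bump_q x ^ m) \<longlongrightarrow> 0) F"
proof -
  have "((\<lambda>x. poly p x * (exp (- 1 / bump_q x) / bump_q x ^ m)) \<longlongrightarrow> poly p a * 0) F"
    using filterlim_compose[OF tendsto_exp_neg_inverse_div_power assms(1)] assms(2)
    by (intro tendsto_intros) auto
  then show ?thesis by simp
qed

lemma bump_q_tendsto_0:
  shows "filterlim bump_q (at_right 0) (at_right 0)"
    and "filterlim bump_q (at_right 0) (at_left 1)"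
proof -
  have lim: "(bump_q \<longlongrightarrow> bump_q x) (at x within S)" for x S
    unfolding bump_q_def by (intro tendsto_intros)
  have "\<forall>\<^sub>F x in at_right 0. 0 < bump_q x" "\<forall>\<^sub>F x in at_left 1. 0 < bump_q x"
    unfolding eventually_at_right_field eventually_at_left_field bump_q_def
    by (intro exI[of _ 1] exI[of _ 0]; simp)+
  moreover have "(bump_q \<longlongrightarrow> 0) (at_right 0)" "(bump_q \<longlongrightarrow> 0) (at_left 1)"
    using lim[of 0 "{0<..}"] lim[of 1 "{..<1}"] by (simp_all add: bump_q_def)
  ultimately show "filterlim bump_q (at_right 0) (at_right 0)" "filterlim bump_q (at_right 0) (at_left 1)"
    by (simp_all add: tendsto_imp_filterlim_at_right)
qed

lemma has_real_derivative_bump_interior: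
  assumes x: "0 < x" "x < 1"
  shows "((\<lambda>x. poly (bump_poly n) x * exp (- 1 / bump_q x) / bump_q x ^ (2 * n)) has_real_derivative
           poly (bump_poly (Suc n)) x * exp (- 1 / bump_q x) / bump_q x ^ (2 * Suc n)) (at x)"
proof -
  have q: "bump_q x \<noteq> 0" and Q: "bump_q x ^ (2 * n) \<noteq> 0"
    using x by (simp_all add: bump_q_def)
  have dq: "(bump_q has_real_derivative 1 - 2 * x) (at x)"
    unfolding bump_q_def by (auto intro!: derivative_eq_intros)
  have dE: "((\<lambda>x. exp (- 1 / bump_q x)) has_real_derivative
      exp (- 1 / bump_q x) * ((1 - 2 * x) / bump_q x ^ 2)) (at x)"
    using q by (auto intro!: derivative_eq_intros dq simp: power2_eq_square field_simps)
  have "bump_q x ^ (2 * n - 1) = bump_q x ^ (2 * n) / bump_q x" if "n \<noteq> 0"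
    using q that by (simp add: power_diff)
  then have dQ: "((\<lambda>x. bump_q x ^ (2 * n)) has_real_derivative
      2 * real n * bump_q x ^ (2 * n) * (1 - 2 * x) / bump_q x) (at x)"
    using DERIV_chain2[OF DERIV_pow[of "2 * n"] dq] by (cases "n = 0") auto
  have "poly [:0, 1, -1:] x = bump_q x" "poly [:1, -2:] x = 1 - 2 * x"
    by (simp_all add: bump_q_def algebra_simps)
  then have poly_Suc: "poly (bump_poly (Suc n)) x = poly (pderiv (bump_poly n)) x * (bump_q x)\<^sup>2
      + poly (bump_poly n) x * (1 - 2 * x) * (1 - 2 * real n * bump_q x)"
    by (simp only: bump_poly.simps poly_add poly_mult poly_power poly_diff poly_1 poly_smult)
  have Q_Suc: "bump_q x ^ (2 * Suc n) = bump_q x ^ (2 * n) * (bump_q x)\<^sup>2"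
    by (simp add: power2_eq_square)
  show ?thesis
    unfolding poly_Suc Q_Suc
    by (rule DERIV_cong[OF DERIV_divide[OF DERIV_mult[OF poly_DERIV dE] dQ Q]])
      (use q Q in \<open>simp add: field_simps power2_eq_square\<close>)
qed

lemma bump_deriv_endpoints:
  shows "(bump_deriv n has_real_derivative 0) (at 0)" and "(bump_deriv n has_real_derivative 0) (at 1)"
proof -
  have outside: "bump_deriv n y = 0" if "y \<le> 0 \<or> 1 \<le> y" for y
    using that by (auto simp: bump_deriv_def)
  \<comment> \<open>on \<open>(0, 1)\<close>, \<open>1 / y = (1 - y) / q\<close> and \<open>1 / (y - 1) = - y / q\<close> turn the difference
    quotients into bump-type terms\<close>
  have right0: "\<forall>\<^sub>F y in at_right 0. poly (bump_poly n * [:1, -1:]) y * exp (- 1 / bump_q y) / bump_q y ^ (2 * n + 1)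
      = (bump_deriv n y - bump_deriv n 0) / (y - 0)"
    by (rule eventually_at_rightI[of 0 1]) (auto simp: bump_deriv_def bump_q_def field_simps)
  have left1: "\<forall>\<^sub>F y in at_left 1. poly (bump_poly n * [:0, -1:]) y * exp (- 1 / bump_q y) / bump_q y ^ (2 * n + 1)
      = (bump_deriv n y - bump_deriv n 1) / (y - 1)"
    by (rule eventually_at_leftI[of 0 1]) (auto simp: bump_deriv_def bump_q_def field_simps)
  have "((\<lambda>y. (bump_deriv n y - bump_deriv n 0) / (y - 0)) \<longlongrightarrow> 0) (at 0)"
    unfolding filterlim_at_split
  proof
    show "((\<lambda>y. (bump_deriv n y - bump_deriv n 0) / (y - 0)) \<longlongrightarrow> 0) (at_left 0)"
      by (rule tendsto_eventually) (auto simp: eventually_at_left_field outside intro!: exI[of _ "-1"])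
    show "((\<lambda>y. (bump_deriv n y - bump_deriv n 0) / (y - 0)) \<longlongrightarrow> 0) (at_right 0)"
      using tendsto_cong[OF right0] tendsto_poly_bump[OF bump_q_tendsto_0(1) tendsto_ident_at] by blast
  qed
  then show "(bump_deriv n has_real_derivative 0) (at 0)"
    by (simp add: has_field_derivative_iff outside)
  have "((\<lambda>y. (bump_deriv n y - bump_deriv n 1) / (y - 1)) \<longlongrightarrow> 0) (at 1)"
    unfolding filterlim_at_split
  proof
    show "((\<lambda>y. (bump_deriv n y - bump_deriv n 1) / (y - 1)) \<longlongrightarrow> 0) (at_left 1)"
      using tendsto_cong[OF left1] tendsto_poly_bump[OF bump_q_tendsto_0(2) tendsto_ident_at] by blast
    show "((\<lambda>y. (bump_deriv n y - bump_deriv n 1) / (y - 1)) \<longlongrightarrow> 0) (at_right 1)"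
      by (rule tendsto_eventually) (auto simp: eventually_at_right_field outside intro!: exI[of _ 2])
  qed
  then show "(bump_deriv n has_real_derivative 0) (at 1)"
    by (simp add: has_field_derivative_iff outside)
qed

lemma deriv_seq_bump: "deriv_seq bump_deriv"
  unfolding deriv_seq_def
proof (intro allI)
  fix n and x :: real
  consider "x < 0 \<or> 1 < x" | "0 < x \<and> x < 1" | "x = 0" | "x = 1" by fastforce
  then show "(bump_deriv n has_real_derivative bump_deriv (Suc n) x) (at x)"
  proof cases
    case 1
    have "(bump_deriv n has_real_derivative 0) (at x)"
      by (rule has_field_derivative_transform_within_open[of "\<lambda>_. 0" _ _ "- {0..1}"])
        (use 1 in \<open>auto simp: bump_deriv_def\<close>)
    moreover have "bump_deriv (Suc n) x = 0" using 1 by (auto simp: bump_deriv_def)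
    ultimately show ?thesis by simp
  next
    case 2
    then have "(bump_deriv n has_real_derivative
        poly (bump_poly (Suc n)) x * exp (- 1 / bump_q x) / bump_q x ^ (2 * Suc n)) (at x)"
      by (intro has_field_derivative_transform_within_open[OF has_real_derivative_bump_interior, where S="{0<..<1}"])
        (auto simp: bump_deriv_def)
    then show ?thesis using 2 by (simp add: bump_deriv_def)
  qed (auto simp: bump_deriv_def intro: bump_deriv_endpoints)
qed

lemma bump_deriv_0: "bump_deriv 0 x = (if 0 < x \<and> x < 1 then exp (- 1 / bump_q x) else 0)"
  by (simp add: bump_deriv_def)

lemma isCont_bump_deriv: "isCont (bump_deriv n) x"
  using deriv_seqD[OF deriv_seq_bump] by (rule DERIV_isCont)

lemma bump_deriv_0_pos: "0 < x \<Longrightarrow> x < 1 \<Longrightarrow> 0 < bump_deriv 0 x"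
  by (simp add: bump_deriv_0)

lemma bump_deriv_0_nonneg: "0 \<le> bump_deriv 0 x"
  by (simp add: bump_deriv_0)

lemma bump_deriv_eq_0: "x \<notin> {0<..<1} \<Longrightarrow> bump_deriv n x = 0"
  by (auto simp: bump_deriv_def)

lemma integral_from_left_eq_0:
  fixes F :: "real \<Rightarrow> real"
  assumes "\<And>t. t \<le> 0 \<Longrightarrow> F t = 0" "y \<le> 0"
  shows "integral {-1..y} F = 0"
proof -
  have "integral {-1..y} F = integral {-1..y} (\<lambda>_. 0 :: real)"
    by (rule integral_cong) (use assms in auto)
  then show ?thesis by simp
qed

lemma has_real_derivative_integral_from_left:
  fixes F :: "real \<Rightarrow> real"
  assumes cF: "\<And>x. isCont F x" and F0: "\<And>t. t \<le> 0 \<Longrightarrow> F t = 0"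
  shows "((\<lambda>y. integral {-1..y} F) has_real_derivative F y) (at y)"
proof (cases "y < 0")
  case True
  have "((\<lambda>y. integral {-1..y} F) has_real_derivative 0) (at y)"
    by (rule has_field_derivative_transform_within_open[of "\<lambda>_. 0" _ _ "{..<0}"])
      (use True integral_from_left_eq_0[OF F0] in auto)
  then show ?thesis using True F0 by simp
next
  case False
  have "((\<lambda>y. integral {-1..y} F) has_real_derivative F y) (at y within {-1..y + 1})"
    using False cF by (intro integral_has_real_derivative continuous_at_imp_continuous_on) auto
  moreover have "at y within {-1..y + 1} = at y"
    by (rule at_within_interior) (use False in auto)
  ultimately show ?thesis by simp
qed

definition bump_mass :: real where
  "bump_mass = integral {0..1} (bump_deriv 0)"

lemma bump_mass_pos: "0 < bump_mass"
proof -
  have c: "continuous_on {0..1} (bump_deriv 0)"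
    using isCont_bump_deriv by (intro continuous_at_imp_continuous_on) auto
  have "\<not> (\<forall>x\<in>{0..1}. bump_deriv 0 x = 0)"
    using bump_deriv_0_pos[of "1 / 2"] by force
  then have "bump_mass \<noteq> 0"
    unfolding bump_mass_def using integral_eq_0_iff[OF c zero_less_one] bump_deriv_0_nonneg by blast
  moreover have "0 \<le> bump_mass"
    unfolding bump_mass_def using c bump_deriv_0_nonneg
    by (intro integral_nonneg integrable_continuous_interval) auto
  ultimately show ?thesis by simp
qed

lemma integral_bump_deriv_0:
  assumes "1 \<le> y"
  shows "integral {-1..y} (bump_deriv 0) = bump_mass"
  unfolding bump_mass_def using assms isCont_bump_deriv bump_deriv_eq_0
  by (intro integral_eq_integral_support continuous_at_imp_continuous_on) auto

definition smooth_step :: "real \<Rightarrow> real" where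
  "smooth_step y = integral {-1..y} (bump_deriv 0) / bump_mass"

definition smooth_ramp :: "real \<Rightarrow> real" where
  "smooth_ramp y = integral {-1..y} smooth_step"

lemma smooth_step_deriv: "(smooth_step has_real_derivative bump_deriv 0 y / bump_mass) (at y)"
  unfolding smooth_step_def[abs_def]
  using isCont_bump_deriv bump_deriv_eq_0
  by (intro DERIV_cdivide has_real_derivative_integral_from_left) auto

lemma smooth_step_eq_0: "y \<le> 0 \<Longrightarrow> smooth_step y = 0"
  unfolding smooth_step_def using bump_deriv_eq_0 by (simp add: integral_from_left_eq_0)

lemma smooth_step_eq_1: "1 \<le> y \<Longrightarrow> smooth_step y = 1"
  unfolding smooth_step_def using bump_mass_pos by (simp add: integral_bump_deriv_0)

lemma isCont_smooth_step: "isCont smooth_step y"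
  using smooth_step_deriv by (rule DERIV_isCont)

lemma smooth_ramp_deriv: "(smooth_ramp has_real_derivative smooth_step y) (at y)"
  unfolding smooth_ramp_def[abs_def]
  using isCont_smooth_step smooth_step_eq_0 by (rule has_real_derivative_integral_from_left)

lemma smooth_ramp_eq_0: "y \<le> 0 \<Longrightarrow> smooth_ramp y = 0"
  unfolding smooth_ramp_def using smooth_step_eq_0 by (rule integral_from_left_eq_0)

lemma smooth_ramp_affine: "\<exists>C. \<forall>y\<ge>1. smooth_ramp y = C + y"
proof (intro exI allI impI)
  fix y :: real assume "1 \<le> y"
  have "smooth_step integrable_on {-1..y}"
    using isCont_smooth_step by (intro integrable_continuous_interval continuous_at_imp_continuous_on) auto
  then have "smooth_ramp y = smooth_ramp 1 + integral {1..y} smooth_step"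
    unfolding smooth_ramp_def
    using Henstock_Kurzweil_Integration.integral_combine[where a="-1" and c=1 and b=y and f=smooth_step] \<open>1 \<le> y\<close>
    by simp
  also have "integral {1..y} smooth_step = integral {1..y} (\<lambda>_. 1)"
    by (rule integral_cong) (simp add: smooth_step_eq_1)
  finally show "smooth_ramp y = (smooth_ramp 1 - 1) + y" using \<open>1 \<le> y\<close> by simp
qed

definition ramp_deriv :: "nat \<Rightarrow> real \<Rightarrow> real" where
  "ramp_deriv n = (case n of 0 \<Rightarrow> smooth_ramp | Suc 0 \<Rightarrow> smooth_step
     | Suc (Suc m) \<Rightarrow> (\<lambda>y. bump_deriv m y / bump_mass))"

lemma deriv_seq_ramp: "deriv_seq ramp_deriv"
proof -
  have "deriv_seq (\<lambda>n y. bump_deriv n y / bump_mass)"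
    using deriv_seq_affine_change[OF deriv_seq_bump, of "1 / bump_mass" 1 0] by simp
  then have "deriv_seq (\<lambda>n. case n of 0 \<Rightarrow> smooth_step | Suc m \<Rightarrow> (\<lambda>y. bump_deriv m y / bump_mass))"
    by (rule deriv_seq_antiderivative) (simp add: smooth_step_deriv)
  then have "deriv_seq (\<lambda>n. case n of 0 \<Rightarrow> smooth_ramp | Suc m \<Rightarrow>
      (case m of 0 \<Rightarrow> smooth_step | Suc k \<Rightarrow> (\<lambda>y. bump_deriv k y / bump_mass)))"
    by (rule deriv_seq_antiderivative) (simp add: smooth_ramp_deriv)
  moreover have "(\<lambda>n. case n of 0 \<Rightarrow> smooth_ramp | Suc m \<Rightarrow>
      (case m of 0 \<Rightarrow> smooth_step | Suc k \<Rightarrow> (\<lambda>y. bump_deriv k y / bump_mass))) = ramp_deriv"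
    by (auto simp: ramp_deriv_def fun_eq_iff split: nat.split)
  ultimately show ?thesis by simp
qed

lemma ramp_deriv_eq_0: "n \<le> 2 \<Longrightarrow> y \<le> 0 \<Longrightarrow> ramp_deriv n y = 0"
  by (auto simp: ramp_deriv_def le_Suc_eq numeral_2_eq_2 smooth_ramp_eq_0 smooth_step_eq_0 bump_deriv_eq_0)

lemma ramp_deriv_affine: "n \<le> 2 \<Longrightarrow> \<exists>\<alpha> \<beta>. \<forall>y\<ge>1. ramp_deriv n y = \<alpha> + \<beta> * y"
proof -
  assume "n \<le> 2"
  then consider "n = 0" | "n = 1" | "n = 2" by linarith
  then show ?thesis
  proof cases
    case 1
    obtain C where "\<forall>y\<ge>1. smooth_ramp y = C + y"
      using smooth_ramp_affine by blast
    with 1 show ?thesis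
      by (intro exI[of _ C] exI[of _ 1]) (simp add: ramp_deriv_def)
  next
    case 2
    then show ?thesis
      by (intro exI[of _ 1] exI[of _ 0]) (simp add: ramp_deriv_def smooth_step_eq_1)
  next
    case 3
    then show ?thesis
      by (intro exI[of _ 0] exI[of _ 0]) (simp add: ramp_deriv_def numeral_2_eq_2 bump_deriv_eq_0)
  qed
qed

text \<open>The \<open>n\<close>-th derivative of \<open>y \<mapsto> d * smooth_ramp (y / d)\<close>, which smooths \<open>max 0 y\<close> at scale \<open>d\<close>;
  for \<open>n = 2\<close> it is a mollifier supported in \<open>[0, d]\<close> with integral \<open>1\<close>.\<close>
definition scaled_ramp_deriv :: "real \<Rightarrow> nat \<Rightarrow> real \<Rightarrow> real" where
  "scaled_ramp_deriv d n y = d * (1 / d) ^ n * ramp_deriv n (y / d)"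

lemma deriv_seq_scaled_ramp: "deriv_seq (scaled_ramp_deriv d)"
  using deriv_seq_affine_change[OF deriv_seq_ramp, of d "1 / d" 0]
  by (simp add: scaled_ramp_deriv_def[abs_def])

lemma scaled_ramp_deriv_eq_0: "0 < d \<Longrightarrow> n \<le> 2 \<Longrightarrow> y \<le> 0 \<Longrightarrow> scaled_ramp_deriv d n y = 0"
  by (simp add: scaled_ramp_deriv_def ramp_deriv_eq_0 divide_nonpos_pos)

lemma scaled_ramp_deriv_affine:
  assumes "0 < d" "n \<le> 2"
  shows "\<exists>\<alpha> \<beta>. \<forall>y\<ge>d. scaled_ramp_deriv d n y = \<alpha> + \<beta> * y"
proof -
  obtain \<alpha> \<beta> where ab: "\<forall>z\<ge>1. ramp_deriv n z = \<alpha> + \<beta> * z"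
    using ramp_deriv_affine[OF assms(2)] by blast
  have "scaled_ramp_deriv d n y = d * (1 / d) ^ n * \<alpha> + d * (1 / d) ^ n * \<beta> / d * y" if "d \<le> y" for y
    using ab that assms(1) by (simp add: scaled_ramp_deriv_def algebra_simps)
  then show ?thesis by blast
qed

lemma scaled_ramp_deriv1_eq_1: "0 < d \<Longrightarrow> d \<le> y \<Longrightarrow> scaled_ramp_deriv d 1 y = 1"
  by (simp add: scaled_ramp_deriv_def ramp_deriv_def smooth_step_eq_1)

lemma scaled_ramp_deriv2_nonneg: "0 < d \<Longrightarrow> 0 \<le> scaled_ramp_deriv d 2 y"
  using bump_mass_pos bump_deriv_0_nonneg
  by (simp add: scaled_ramp_deriv_def ramp_deriv_def numeral_2_eq_2)

lemma scaled_ramp_deriv2_eq_0: "0 < d \<Longrightarrow> y \<notin> {0<..<d} \<Longrightarrow> scaled_ramp_deriv d 2 y = 0"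
  by (auto simp: scaled_ramp_deriv_def ramp_deriv_def numeral_2_eq_2 bump_deriv_eq_0
      divide_less_eq less_divide_eq)

lemma has_integral_scaled_ramp_deriv2:
  assumes d: "0 < d" and p: "A \<le> p" "p + d \<le> B"
  shows "((\<lambda>y. scaled_ramp_deriv d 2 (y - p)) has_integral 1) {A..B}"
proof -
  have "((\<lambda>y. scaled_ramp_deriv d 2 (y - p)) has_integral
      scaled_ramp_deriv d 1 (B - p) - scaled_ramp_deriv d 1 (A - p)) {A..B}"
    using p d deriv_seqD[OF deriv_seq_shift[OF deriv_seq_scaled_ramp[of d], of p], of 1]
    by (intro has_integral_of_real_derivative) (auto simp: numeral_2_eq_2)
  then show ?thesis
    using p d scaled_ramp_deriv1_eq_1[of d "B - p"] scaled_ramp_deriv_eq_0[of d 1 "A - p"] by simp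
qed

lemma integral_mollify_approx:
  fixes u :: "real \<Rightarrow> real"
  assumes d: "0 < d" and cu: "continuous_on {A..B} u" and p: "A \<le> p" "p + d \<le> B"
    and close: "\<And>y. y \<in> {p..p + d} \<Longrightarrow> \<bar>u y - u p\<bar> \<le> \<eta>"
  shows "\<bar>integral {A..B} (\<lambda>y. u y * scaled_ramp_deriv d 2 (y - p)) - u p\<bar> \<le> \<eta>"
proof -
  define \<rho> where "\<rho> y = scaled_ramp_deriv d 2 (y - p)" for y
  have \<rho>1: "(\<rho> has_integral 1) {A..B}"
    unfolding \<rho>_def using has_integral_scaled_ramp_deriv2[OF d p] .
  have "continuous_on {A..B} \<rho>"
    unfolding \<rho>_def using deriv_seqD[OF deriv_seq_shift[OF deriv_seq_scaled_ramp]]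
    by (intro continuous_at_imp_continuous_on ballI DERIV_isCont) blast
  then have i: "(\<lambda>y. (u y - u p) * \<rho> y) integrable_on {A..B}"
    using cu by (intro integrable_continuous_interval continuous_intros)
  have "((\<lambda>y. u y * \<rho> y - u p * \<rho> y) has_integral integral {A..B} (\<lambda>y. (u y - u p) * \<rho> y)) {A..B}"
    using i by (simp add: algebra_simps integrable_integral)
  then have "((\<lambda>y. u y * \<rho> y) has_integral integral {A..B} (\<lambda>y. (u y - u p) * \<rho> y) + u p) {A..B}"
    using has_integral_add[OF _ has_integral_mult_right[OF \<rho>1, of "u p"]] by fastforce
  then have eq: "integral {A..B} (\<lambda>y. u y * \<rho> y) - u p = integral {A..B} (\<lambda>y. (u y - u p) * \<rho> y)"
    by (simp add: integral_unique)
  have "norm (integral {A..B} (\<lambda>y. (u y - u p) * \<rho> y)) \<le> integral {A..B} (\<lambda>y. \<eta> * \<rho> y)"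
  proof (rule integral_norm_bound_integral[OF i])
    show "(\<lambda>y. \<eta> * \<rho> y) integrable_on {A..B}"
      using has_integral_mult_right[OF \<rho>1] by blast
    show "norm ((u y - u p) * \<rho> y) \<le> \<eta> * \<rho> y" for y
    proof (cases "y - p \<in> {0<..<d}")
      case True
      then have "\<bar>u y - u p\<bar> \<le> \<eta>" using close by simp
      then show ?thesis
        using scaled_ramp_deriv2_nonneg[OF d] by (simp add: \<rho>_def abs_mult mult_right_mono)
    next
      case False
      then show ?thesis by (simp add: \<rho>_def scaled_ramp_deriv2_eq_0[OF d])
    qed
  qed
  also have "integral {A..B} (\<lambda>y. \<eta> * \<rho> y) = \<eta>"
    by (rule integral_unique) (use has_integral_mult_right[OF \<rho>1, of \<eta>] in simp)
  finally show ?thesis using eq by (simp add: \<rho>_def)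
qed

subsection \<open>Testing against a smoothed hat function\<close>

text \<open>As \<open>d \<rightarrow> 0\<close>, \<open>smooth_hat d c h\<close> tends to the hat function of height \<open>h\<close> on \<open>[c - h, c + h]\<close>,
  and its second derivative to \<open>\<delta>\<^sub>c\<^sub>-\<^sub>h - 2 \<delta>\<^sub>c + \<delta>\<^sub>c\<^sub>+\<^sub>h\<close>.\<close>
definition smooth_hat :: "real \<Rightarrow> real \<Rightarrow> real \<Rightarrow> real \<Rightarrow> real" where
  "smooth_hat d c h y = second_diff (scaled_ramp_deriv d 0) (y - c) h"

lemma higher_deriv_smooth_hat:
  "(deriv ^^ n) (smooth_hat d c h) = (\<lambda>y. second_diff (scaled_ramp_deriv d n) (y - c) h)"
  using higher_deriv_deriv_seq[OF deriv_seq_second_diff[OF deriv_seq_scaled_ramp]]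
  by (simp add: smooth_hat_def[abs_def])

lemma smooth_on_smooth_hat: "smooth_on U (smooth_hat d c h)"
  using smooth_on_deriv_seq[OF deriv_seq_second_diff[OF deriv_seq_scaled_ramp]]
  by (simp add: smooth_hat_def[abs_def])

lemma smooth_hat_deriv2:
  "deriv (deriv (smooth_hat d c h)) y = second_diff (scaled_ramp_deriv d 2) (y - c) h"
  using higher_deriv_smooth_hat[of 2] by (simp add: numeral_2_eq_2)

lemma smooth_hat_higher_deriv_vanish:
  assumes d: "0 < d" and h: "0 \<le> h" and n: "n \<le> 2" and y: "y \<le> c - h \<or> c + h + d \<le> y"
  shows "(deriv ^^ n) (smooth_hat d c h) y = 0"
  unfolding higher_deriv_smooth_hat
proof (cases "y \<le> c - h")
  case True
  then show "second_diff (scaled_ramp_deriv d n) (y - c) h = 0"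
    using h by (simp add: second_diff_def scaled_ramp_deriv_eq_0[OF d n])
next
  case False
  obtain \<alpha> \<beta> where "\<forall>z\<ge>d. scaled_ramp_deriv d n z = \<alpha> + \<beta> * z"
    using scaled_ramp_deriv_affine[OF d n] by blast
  then show "second_diff (scaled_ramp_deriv d n) (y - c) h = 0"
    using False y h by (intro second_diff_affine[of h]) auto
qed

lemma smooth_hat_nonneg:
  assumes d: "0 < d" and h: "0 < h"
  shows "0 \<le> smooth_hat d c h y"
proof -
  have "(scaled_ramp_deriv d 0 has_real_derivative scaled_ramp_deriv d 1 t) (at t)"
    and "(scaled_ramp_deriv d 1 has_real_derivative scaled_ramp_deriv d 2 t) (at t)" for t
    using deriv_seqD[OF deriv_seq_scaled_ramp, of d 0 t] deriv_seqD[OF deriv_seq_scaled_ramp, of d 1 t]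
    by (simp_all add: numeral_2_eq_2)
  then obtain \<xi> where "second_diff (scaled_ramp_deriv d 0) (y - c) h = h\<^sup>2 * scaled_ramp_deriv d 2 \<xi>"
    using second_diff_mvt[OF h, of "y - c" "scaled_ramp_deriv d 0" "scaled_ramp_deriv d 1" "scaled_ramp_deriv d 2"]
    by blast
  then show ?thesis
    using scaled_ramp_deriv2_nonneg[OF d] by (simp add: smooth_hat_def)
qed

lemma test_fun_smooth_hat:
  assumes d: "0 < d" and h: "0 < h" and I: "{c - h..c + h + d} \<subseteq> I"
  shows "test_fun I (smooth_hat d c h)"
proof -
  have "y \<in> {c - h..c + h + d}" if "smooth_hat d c h y \<noteq> 0" for y
  proof (rule ccontr)
    assume "y \<notin> {c - h..c + h + d}"
    then have "y \<le> c - h \<or> c + h + d \<le> y" by auto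
    then show False
      using that smooth_hat_higher_deriv_vanish[OF d less_imp_le[OF h], of 0 y c] by simp
  qed
  then have supp: "{y. smooth_hat d c h y \<noteq> 0} \<subseteq> {c - h..c + h + d}"
    by blast
  then have "closure {y. smooth_hat d c h y \<noteq> 0} \<subseteq> {c - h..c + h + d}"
    by (rule closure_minimal) simp
  moreover have "compact (closure {y. smooth_hat d c h y \<noteq> 0})"
    using supp by (simp add: compact_closure bounded_subset[OF bounded_closed_interval])
  ultimately show ?thesis
    unfolding test_fun_def using I smooth_on_smooth_hat by blast
qed

lemma smooth_hat_has_derivs:
  shows "(smooth_hat d c h has_real_derivative deriv (smooth_hat d c h) y) (at y)"
    and "(deriv (smooth_hat d c h) has_real_derivative deriv (deriv (smooth_hat d c h)) y) (at y)"
    and "continuous_on S (smooth_hat d c h)"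
    and "continuous_on S (deriv (deriv (smooth_hat d c h)))"
proof -
  show d1: "(smooth_hat d c h has_real_derivative deriv (smooth_hat d c h) y) (at y)" for y
    using smooth_onD(1)[OF smooth_on_smooth_hat] by blast
  show "(deriv (smooth_hat d c h) has_real_derivative deriv (deriv (smooth_hat d c h)) y) (at y)"
    using smooth_onD(2)[OF smooth_on_smooth_hat] by blast
  show "continuous_on S (smooth_hat d c h)"
    by (rule continuous_at_imp_continuous_on) (use d1 DERIV_isCont in blast)
  show "continuous_on S (deriv (deriv (smooth_hat d c h)))"
    by (rule continuous_at_imp_continuous_on) (use smooth_onD(3)[OF smooth_on_smooth_hat] in blast)
qed

lemma integral_smooth_hat_deriv2_approx:
  fixes u :: "real \<Rightarrow> real"
  assumes d: "0 < d" and h: "0 < h" and cu: "continuous_on {c - h..c + h + d} u"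
    and close: "\<And>p y. p \<in> {c - h, c, c + h} \<Longrightarrow> y \<in> {p..p + d} \<Longrightarrow> \<bar>u y - u p\<bar> \<le> \<eta>"
  shows "\<bar>integral {c - h..c + h + d} (\<lambda>y. u y * deriv (deriv (smooth_hat d c h)) y)
      - second_diff u c h\<bar> \<le> 4 * \<eta>"
proof -
  define J where "J p = integral {c - h..c + h + d} (\<lambda>y. u y * scaled_ramp_deriv d 2 (y - p))" for p
  have approx: "\<bar>J p - u p\<bar> \<le> \<eta>" if "p \<in> {c - h, c, c + h}" for p
    unfolding J_def using that h d
    by (intro integral_mollify_approx[OF d cu] close) auto
  have "continuous_on S (\<lambda>y. scaled_ramp_deriv d 2 (y - p))" for S p
    by (rule continuous_at_imp_continuous_on)
      (use deriv_seqD[OF deriv_seq_shift[OF deriv_seq_scaled_ramp[of d], of p]] DERIV_isCont in blast)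
  then have "(\<lambda>y. u y * scaled_ramp_deriv d 2 (y - p)) integrable_on {c - h..c + h + d}" for p
    using cu by (intro integrable_continuous_interval continuous_on_mult)
  then have "((\<lambda>y. u y * scaled_ramp_deriv d 2 (y - (c + h)) + u y * scaled_ramp_deriv d 2 (y - (c - h))
        - 2 * (u y * scaled_ramp_deriv d 2 (y - c)))
      has_integral J (c + h) + J (c - h) - 2 * J c) {c - h..c + h + d}"
    unfolding J_def by (intro has_integral_diff has_integral_add has_integral_mult_right integrable_integral)
  then have "integral {c - h..c + h + d} (\<lambda>y. u y * deriv (deriv (smooth_hat d c h)) y)
      = J (c + h) + J (c - h) - 2 * J c"
    by (simp add: smooth_hat_deriv2 second_diff_def algebra_simps diff_diff_eq2 integral_unique)
  with approx[of "c + h"] approx[of "c - h"] approx[of c] show ?thesis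
    by (simp add: second_diff_def abs_le_iff)
qed

lemma integral_quadratic_mult_smooth_hat_deriv2:
  assumes d: "0 < d" and h: "0 < h"
  shows "integral {c - h..c + h + d} (\<lambda>y. M / 2 * (y - c)\<^sup>2 * deriv (deriv (smooth_hat d c h)) y)
      = integral {c - h..c + h + d} (\<lambda>y. M * smooth_hat d c h y)"
proof (rule integral_by_parts_twice[where T' = "deriv (smooth_hat d c h)"])
  show "((\<lambda>y. M / 2 * (y - c)\<^sup>2) has_real_derivative M * (y - c)) (at y)" for y
    by (auto intro!: derivative_eq_intros)
  show "((\<lambda>y. M * (y - c)) has_real_derivative M) (at y)" for y
    by (auto intro!: derivative_eq_intros)
  have "(deriv ^^ n) (smooth_hat d c h) y = 0" if "n \<le> 1" "y = c - h \<or> y = c + h + d" for n y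
    using that h by (intro smooth_hat_higher_deriv_vanish[OF d]) auto
  from this[of 0] this[of 1]
  show "smooth_hat d c h (c - h) = 0" "smooth_hat d c h (c + h + d) = 0"
    "deriv (smooth_hat d c h) (c - h) = 0" "deriv (smooth_hat d c h) (c + h + d) = 0"
    by simp_all
qed (use d h smooth_hat_has_derivs(1,2) in auto)

subsection \<open>From the distributional inequality to second differences\<close>

lemma distr_super_smooth_hat:
  assumes D: "distr_super I f g" and cf: "continuous_on I f" and cg: "continuous_on (f ` I) g"
    and d: "0 < d" and h: "0 < h" and box: "{c - h..c + h + d} \<subseteq> I"
  shows "integral {c - h..c + h + d} (\<lambda>y. f y * deriv (deriv (smooth_hat d c h)) y)
      \<le> integral {c - h..c + h + d} (\<lambda>y. g (f y) * smooth_hat d c h y)"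
proof -
  have vanish: "smooth_hat d c h y = 0" "deriv (deriv (smooth_hat d c h)) y = 0"
    if "y \<notin> {c - h..c + h + d}" for y
    using smooth_hat_higher_deriv_vanish[OF d less_imp_le[OF h], of 0 y c]
      smooth_hat_higher_deriv_vanish[OF d less_imp_le[OF h], of 2 y c] that
    by (auto simp: numeral_2_eq_2)
  have "continuous_on I (\<lambda>y. g (f y))"
    using continuous_on_compose[OF cf cg] by (simp add: o_def)
  then have cgf: "continuous_on {c - h..c + h + d} (\<lambda>y. g (f y))"
    using box by (rule continuous_on_subset)
  have cfb: "continuous_on {c - h..c + h + d} f"
    using cf box by (rule continuous_on_subset)
  have "integral I (\<lambda>y. f y * deriv (deriv (smooth_hat d c h)) y) \<le> integral I (\<lambda>y. g (f y) * smooth_hat d c h y)"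
    using D test_fun_smooth_hat[OF d h box] smooth_hat_nonneg[OF d h] unfolding distr_super_def by blast
  moreover have "integral I (\<lambda>y. f y * deriv (deriv (smooth_hat d c h)) y)
      = integral {c - h..c + h + d} (\<lambda>y. f y * deriv (deriv (smooth_hat d c h)) y)"
    using continuous_on_mult[OF cfb smooth_hat_has_derivs(4)] vanish(2) box
    by (intro integral_eq_integral_support) auto
  moreover have "integral I (\<lambda>y. g (f y) * smooth_hat d c h y)
      = integral {c - h..c + h + d} (\<lambda>y. g (f y) * smooth_hat d c h y)"
    using continuous_on_mult[OF cgf smooth_hat_has_derivs(3)] vanish(1) box
    by (intro integral_eq_integral_support) auto
  ultimately show ?thesis by simp
qed

lemma distr_super_smooth_hat_quadratic:
  assumes D: "distr_super I f g" and cf: "continuous_on I f" and cg: "continuous_on (f ` I) g"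
    and d: "0 < d" and h: "0 < h" and box: "{c - h..c + h + d} \<subseteq> I"
    and gM: "\<And>y. y \<in> {c - h..c + h + d} \<Longrightarrow> g (f y) \<le> M"
  shows "integral {c - h..c + h + d} (\<lambda>y. (f y - M / 2 * (y - c)\<^sup>2) * deriv (deriv (smooth_hat d c h)) y) \<le> 0"
proof -
  let ?T = "smooth_hat d c h"
  have "continuous_on I (\<lambda>y. g (f y))"
    using continuous_on_compose[OF cf cg] by (simp add: o_def)
  then have cgf: "continuous_on {c - h..c + h + d} (\<lambda>y. g (f y))"
    using box by (rule continuous_on_subset)
  have "integral {c - h..c + h + d} (\<lambda>y. f y * deriv (deriv ?T) y)
      \<le> integral {c - h..c + h + d} (\<lambda>y. g (f y) * ?T y)"
    by (rule distr_super_smooth_hat[OF D cf cg d h box])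
  also have "\<dots> \<le> integral {c - h..c + h + d} (\<lambda>y. M * ?T y)"
  proof (rule integral_le)
    show "(\<lambda>y. g (f y) * ?T y) integrable_on {c - h..c + h + d}"
      by (rule integrable_continuous_interval[OF continuous_on_mult[OF cgf smooth_hat_has_derivs(3)]])
    show "(\<lambda>y. M * ?T y) integrable_on {c - h..c + h + d}"
      by (rule integrable_continuous_interval[OF continuous_on_mult[OF continuous_on_const smooth_hat_has_derivs(3)]])
    show "g (f y) * ?T y \<le> M * ?T y" if "y \<in> {c - h..c + h + d}" for y
      using gM[OF that] smooth_hat_nonneg[OF d h] by (intro mult_right_mono)
  qed
  also have "\<dots> = integral {c - h..c + h + d} (\<lambda>y. M / 2 * (y - c)\<^sup>2 * deriv (deriv ?T) y)"
    by (rule integral_quadratic_mult_smooth_hat_deriv2[OF d h, symmetric])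
  finally have le: "integral {c - h..c + h + d} (\<lambda>y. f y * deriv (deriv ?T) y)
      \<le> integral {c - h..c + h + d} (\<lambda>y. M / 2 * (y - c)\<^sup>2 * deriv (deriv ?T) y)" .
  have "continuous_on {c - h..c + h + d} f"
    using cf box by (rule continuous_on_subset)
  then have i1: "(\<lambda>y. f y * deriv (deriv ?T) y) integrable_on {c - h..c + h + d}"
    by (rule integrable_continuous_interval[OF continuous_on_mult[OF _ smooth_hat_has_derivs(4)]])
  have "continuous_on {c - h..c + h + d} (\<lambda>y. M / 2 * (y - c)\<^sup>2)"
    by (intro continuous_intros)
  then have i2: "(\<lambda>y. M / 2 * (y - c)\<^sup>2 * deriv (deriv ?T) y) integrable_on {c - h..c + h + d}"
    by (rule integrable_continuous_interval[OF continuous_on_mult[OF _ smooth_hat_has_derivs(4)]])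
  show ?thesis
    unfolding left_diff_distrib integral_diff[OF i1 i2] using le by simp
qed

lemma distr_super_second_diff_le:
  assumes D: "distr_super I f g" and cf: "continuous_on I f" and cg: "continuous_on (f ` I) g"
    and h: "0 < h" and box: "{c - h..c + 2 * h} \<subseteq> I"
    and gM: "\<And>y. y \<in> {c - h..c + 2 * h} \<Longrightarrow> g (f y) \<le> M"
  shows "second_diff f c h \<le> M * h\<^sup>2"
proof (rule field_le_epsilon_scaled[of 4])
  fix \<eta> :: real assume \<eta>: "0 < \<eta>"
  define u where "u y = f y - M / 2 * (y - c)\<^sup>2" for y
  have cu: "continuous_on {c - h..c + 2 * h} u"
    unfolding u_def using continuous_on_subset[OF cf box] by (intro continuous_intros)
  obtain \<delta> where \<delta>: "0 < \<delta>" "\<And>y z. y \<in> {c - h..c + 2 * h} \<Longrightarrow> z \<in> {c - h..c + 2 * h} \<Longrightarrow>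
      dist z y < \<delta> \<Longrightarrow> dist (u z) (u y) < \<eta>"
    using compact_uniformly_continuous[OF cu compact_Icc] \<eta>
    unfolding uniformly_continuous_on_def by metis
  define d where "d = min \<delta> h / 2"
  have d: "0 < d" "d < \<delta>" "d \<le> h"
    using \<delta> h by (auto simp: d_def)
  have sub: "{c - h..c + h + d} \<subseteq> {c - h..c + 2 * h}"
    using d by auto
  have "integral {c - h..c + h + d} (\<lambda>y. u y * deriv (deriv (smooth_hat d c h)) y) \<le> 0"
    unfolding u_def using sub box gM by (intro distr_super_smooth_hat_quadratic[OF D cf cg d(1) h]) auto
  moreover have "\<bar>integral {c - h..c + h + d} (\<lambda>y. u y * deriv (deriv (smooth_hat d c h)) y)
      - second_diff u c h\<bar> \<le> 4 * \<eta>"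
  proof (rule integral_smooth_hat_deriv2_approx[OF d(1) h])
    show "continuous_on {c - h..c + h + d} u"
      using cu sub by (rule continuous_on_subset)
    show "\<bar>u y - u p\<bar> \<le> \<eta>" if "p \<in> {c - h, c, c + h}" "y \<in> {p..p + d}" for p y
      using \<delta>(2)[of p y] that d h by (auto simp: dist_real_def)
  qed
  moreover have "second_diff u c h = second_diff f c h - M * h\<^sup>2"
    using second_diff_quadratic[of M c h] by (simp add: u_def second_diff_def algebra_simps)
  ultimately show "second_diff f c h \<le> M * h\<^sup>2 + \<eta> * 4"
    by (simp add: abs_le_iff)
qed simp

lemma distr_super_imp_upper_D2_le:
  assumes D: "distr_super I f g" and I: "open I" and cf: "continuous_on I f"
    and cg: "continuous_on (f ` I) g" and x: "x \<in> I"
  shows "upper_D2 f x \<le> ereal (g (f x))"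
proof (rule upper_D2_leI)
  fix \<epsilon> :: real assume "0 < \<epsilon>"
  have "continuous_on I (\<lambda>x. g (f x))"
    using continuous_on_compose[OF cf cg] by (simp add: o_def)
  then obtain r where r: "0 < r" "{x - r..x + r} \<subseteq> I"
    "\<And>y. y \<in> {x - r..x + r} \<Longrightarrow> g (f y) \<le> g (f x) + \<epsilon>"
    using continuous_on_open_local_bound[OF I _ x \<open>0 < \<epsilon>\<close>] by blast
  show "\<forall>\<^sub>F t in at_right 0. second_diff f x t \<le> (g (f x) + \<epsilon>) * t\<^sup>2"
    unfolding eventually_at_right_field
  proof (intro exI[of _ "r / 2"] conjI allI impI)
    fix t :: real assume t: "0 < t" "t < r / 2"
    then have sub: "{x - t..x + 2 * t} \<subseteq> {x - r..x + r}" by auto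
    show "second_diff f x t \<le> (g (f x) + \<epsilon>) * t\<^sup>2"
      using r(3) sub by (intro distr_super_second_diff_le[OF D cf cg t(1) order_trans[OF sub r(2)]]) blast
  qed (use r in simp)
qed

theorem propositionA3:
  fixes I :: "real set" and f g :: "real \<Rightarrow> real"
  assumes "open I" and "is_interval I" and "I \<noteq> {}"
    and "continuous_on I f" and "bdd_below (f ` I)"
    and "continuous_on (f ` I) g"
  shows "(visc_super I f g \<longleftrightarrow> distr_super I f g)
       \<and> (distr_super I f g \<longleftrightarrow> (\<forall>x\<in>I. upper_D2 f x \<le> ereal (g (f x))))"
proof -
  note I = assms(1-3) and cf = assms(4) and cg = assms(6)
  have ck: "continuous_on I (\<lambda>x. g (f x))"
    using continuous_on_compose[OF cf cg] by (simp add: o_def)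
  let ?P = "second_diff_super I f (\<lambda>x. g (f x))"
  let ?D2 = "\<forall>x\<in>I. upper_D2 f x \<le> ereal (g (f x))"
  have "visc_super I f g \<Longrightarrow> ?P"
    by (rule visc_super_imp_second_diff_super[OF _ cf])
  moreover have "?P \<Longrightarrow> ?D2"
    using second_diff_super_imp_upper_D2_le[OF _ I(1) ck] by blast
  moreover have "?D2 \<Longrightarrow> visc_super I f g"
    by (rule upper_D2_le_imp_visc_super)
  moreover have "?P \<Longrightarrow> distr_super I f g"
    unfolding distr_super_def using second_diff_super_imp_distr_ineq[OF _ I cf ck] by blast
  moreover have "distr_super I f g \<Longrightarrow> ?D2"
    using distr_super_imp_upper_D2_le[OF _ I(1) cf cg] by blast
  moreover have "?D2 \<Longrightarrow> ?P"
    by (rule upper_D2_le_imp_second_diff_super[OF _ cf])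
  ultimately show ?thesis by blast
qed

end
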